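(* Every proper quasi-tree is $(1,C)$-quasi-isometric to a locally finite simplicial tree, for some $C\geqslant 0$.
   Context: A quasi-tree is a geodesic metric space quasi-isometric to a simplicial tree; proper means closed balls are compact. A simplicial tree is a 1-dimensional simplicial complex which is an $\mathbb{R}$-tree for the path metric with unit edges; locally finite means each vertex has finitely many neighbours. A $(1,C)$-quasi-isometry $f$ satisfies $d(a,b)-C\leqslant d(f(a),f(b))\leqslant d(a,b)+C$ and has $C$-dense image. *)

theory Defs
  imports "HOL-Analysis.Analysis"
begin

definition geodesic_space :: "'a::metric_space itself \<Rightarrow> bool" where
  "geodesic_space _ \<longleftrightarrow>
     (\<forall>x y::'a. \<exists>\<gamma>::real \<Rightarrow> 'a. \<gamma> 0 = x \<and> \<gamma> (dist x y) = y \<and>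
        (\<forall>s\<in>{0..dist x y}. \<forall>t\<in>{0..dist x y}. dist (\<gamma> s) (\<gamma> t) = \<bar>s - t\<bar>))"

definition proper_space :: "'a::metric_space itself \<Rightarrow> bool" where
  "proper_space _ \<longleftrightarrow> (\<forall>(x::'a) r. compact (cball x r))"

definition qi_map :: "real \<Rightarrow> real \<Rightarrow> 'a set \<Rightarrow> ('a \<Rightarrow> 'a \<Rightarrow> real)
     \<Rightarrow> 'b set \<Rightarrow> ('b \<Rightarrow> 'b \<Rightarrow> real) \<Rightarrow> ('a \<Rightarrow> 'b) \<Rightarrow> bool" where
  "qi_map K C A dA B dB f \<longleftrightarrow>
     f ` A \<subseteq> B \<and>
     (\<forall>a\<in>A. \<forall>b\<in>A. dA a b / K - C \<le> dB (f a) (f b) \<and> dB (f a) (f b) \<le> K * dA a b + C) \<and>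
     (\<forall>y\<in>B. \<exists>a\<in>A. dB y (f a) \<le> C)"

definition quasi_isometric :: "'a set \<Rightarrow> ('a \<Rightarrow> 'a \<Rightarrow> real)
     \<Rightarrow> 'b set \<Rightarrow> ('b \<Rightarrow> 'b \<Rightarrow> real) \<Rightarrow> bool" where
  "quasi_isometric A dA B dB \<longleftrightarrow> (\<exists>K C f. K \<ge> 1 \<and> C \<ge> 0 \<and> qi_map K C A dA B dB f)"

definition walk :: "('v \<Rightarrow> 'v \<Rightarrow> bool) \<Rightarrow> 'v list \<Rightarrow> bool" where
  "walk E xs \<longleftrightarrow> xs \<noteq> [] \<and> (\<forall>i. Suc i < length xs \<longrightarrow> E (xs ! i) (xs ! Suc i))"

definition is_tree :: "'v set \<Rightarrow> ('v \<Rightarrow> 'v \<Rightarrow> bool) \<Rightarrow> bool" where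
  "is_tree V E \<longleftrightarrow>
     V \<noteq> {} \<and>
     (\<forall>u v. E u v \<longrightarrow> u \<in> V \<and> v \<in> V \<and> u \<noteq> v \<and> E v u) \<and>
     (\<forall>u\<in>V. \<forall>v\<in>V. \<exists>xs. walk E xs \<and> hd xs = u \<and> last xs = v) \<and>
     \<not> (\<exists>xs. walk E xs \<and> length xs \<ge> 3 \<and> distinct xs \<and> E (last xs) (hd xs))"

definition locally_finite_graph :: "'v set \<Rightarrow> ('v \<Rightarrow> 'v \<Rightarrow> bool) \<Rightarrow> bool" where
  "locally_finite_graph V E \<longleftrightarrow> (\<forall>v\<in>V. finite {w. E v w})"

definition gdist :: "('v \<Rightarrow> 'v \<Rightarrow> bool) \<Rightarrow> 'v \<Rightarrow> 'v \<Rightarrow> real" where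
  "gdist E u v = real (LEAST n. \<exists>xs. walk E xs \<and> hd xs = u \<and> last xs = v \<and> length xs = Suc n)"

text \<open>Points of the geometric realisation: a triple (u,v,t) is the point on the edge
  from u to v at distance t from u (vertices are (v,v,0)); (u,v,t) and (v,u,1-t)
  represent the same point (they are at distance 0).\<close>
definition tree_points :: "'v set \<Rightarrow> ('v \<Rightarrow> 'v \<Rightarrow> bool) \<Rightarrow> ('v \<times> 'v \<times> real) set" where
  "tree_points V E = {(u,v,t). (u = v \<and> u \<in> V \<and> t = 0) \<or> (E u v \<and> 0 \<le> t \<and> t \<le> 1)}"

text \<open>Path metric with unit edge lengths on the geometric realisation.\<close>
definition tree_dist :: "('v \<Rightarrow> 'v \<Rightarrow> bool) \<Rightarrow> ('v \<times> 'v \<times> real) \<Rightarrow> ('v \<times> 'v \<times> real) \<Rightarrow> real" where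
  "tree_dist E p q =
     (case p of (u,v,s) \<Rightarrow> case q of (c,d,t) \<Rightarrow>
       (let via = min (min (s + gdist E u c + t) (s + gdist E u d + (1 - t)))
                      (min ((1 - s) + gdist E v c + t) ((1 - s) + gdist E v d + (1 - t)))
        in if (u,v) = (c,d) then min \<bar>s - t\<bar> via
           else if (u,v) = (d,c) then min \<bar>s - (1 - t)\<bar> via
           else via))"

end

(*
  Fix a base point o and write |x| for the distance from o to x. Through the quasi-isometry,
  the 0-hyperbolicity of the given tree yields Manning's bottleneck property: every chain of
  unit steps from x to y passes within a uniform distance Delta of each point of a geodesic
  from x to y.

  The new tree has, at level k, one vertex for each class of points x with |x| >= k, two points
  being equivalent when a chain of unit steps outside the open ball of radius k about o joins
  them; the parent of a class is the class at level k - 1 containing it. Send x to its class at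
  level floor |x|. For the images of x and y, the level of their last common ancestor equals the
  Gromov product (x.y)_o up to an error bounded in terms of Delta: a geodesic from x to y
  gives the lower bound and the bottleneck property the upper one. Since d(x, y) =
  |x| + |y| - 2 (x.y)_o, tree distance and d agree up to an additive constant. Properness makes
  every level finite (a sphere is covered by finitely many unit balls), so the tree is locally
  finite and countable and can be relabelled by natural numbers.
*)

theory Submission
  imports Defs
begin

section \<open>Walks and the combinatorial distance\<close>

lemma walk_Nil [simp]: "\<not> walk E []"
  by (simp add: walk_def)

lemma walk_single [simp]: "walk E [x]"
  by (simp add: walk_def)

lemma walk_Cons2 [simp]: "walk E (x # y # xs) \<longleftrightarrow> E x y \<and> walk E (y # xs)"
  by (auto simp: walk_def nth_Cons split: nat.splits)

lemma walk_nth: "walk E xs \<Longrightarrow> Suc i < length xs \<Longrightarrow> E (xs ! i) (xs ! Suc i)"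
  by (simp add: walk_def)

lemma walk_take: "walk E xs \<Longrightarrow> 0 < k \<Longrightarrow> walk E (take k xs)"
  unfolding walk_def by auto

lemma walk_drop: "walk E xs \<Longrightarrow> k < length xs \<Longrightarrow> walk E (drop k xs)"
  unfolding walk_def by auto

lemma walk_map:
  assumes "walk R xs" "\<And>u v. R u v \<Longrightarrow> S (f u) (f v)"
  shows "walk S (map f xs)"
  using assms unfolding walk_def by auto

lemma walk_nonempty: "walk E xs \<Longrightarrow> xs \<noteq> []"
  by auto

lemma walk_Cons: "walk E (x # xs) \<longleftrightarrow> xs = [] \<or> (E x (hd xs) \<and> walk E xs)"
  by (cases xs) auto

lemma walk_append:
  assumes "walk E xs" "walk E ys" "E (last xs) (hd ys)"
  shows "walk E (xs @ ys)"
  using assms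
proof (induction xs)
  case (Cons x xs)
  then show ?case
    by (cases "xs = []") (auto simp: walk_Cons)
qed simp

lemma walk_join:
  assumes "walk E xs" "walk E ys" "last xs = hd ys"
  shows "walk E (xs @ tl ys)"
proof (cases "tl ys")
  case (Cons z zs)
  with assms(2) have "E (hd ys) z" "walk E (tl ys)"
    by (cases ys; simp)+
  with assms show ?thesis
    by (intro walk_append) (auto simp: Cons)
qed (use assms in simp)

lemma last_join: "xs \<noteq> [] \<Longrightarrow> ys \<noteq> [] \<Longrightarrow> last xs = hd ys \<Longrightarrow> last (xs @ tl ys) = last ys"
  by (cases ys) auto

lemma walk_rev:
  assumes sym: "\<And>u v. E u v \<Longrightarrow> E v u" and "walk E xs"
  shows "walk E (rev xs)"
  using assms(2)
proof (induction xs)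
  case (Cons x xs)
  show ?case
  proof (cases "xs = []")
    case False
    with Cons have "walk E (rev xs)" "E (last (rev xs)) x"
      by (auto simp: walk_Cons last_rev sym)
    then show ?thesis
      using walk_append[of E "rev xs" "[x]"] by simp
  qed simp
qed simp

definition reachable :: "('v \<Rightarrow> 'v \<Rightarrow> bool) \<Rightarrow> 'v \<Rightarrow> 'v \<Rightarrow> bool" where
  "reachable E u v \<longleftrightarrow> (\<exists>xs. walk E xs \<and> hd xs = u \<and> last xs = v)"

definition walk_dist :: "('v \<Rightarrow> 'v \<Rightarrow> bool) \<Rightarrow> 'v \<Rightarrow> 'v \<Rightarrow> nat" where
  "walk_dist E u v = (LEAST n. \<exists>xs. walk E xs \<and> hd xs = u \<and> last xs = v \<and> length xs = Suc n)"

lemma gdist_eq_walk_dist: "gdist E u v = real (walk_dist E u v)"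
  by (simp add: gdist_def walk_dist_def)

lemma walk_dist_le_length:
  assumes "walk E xs" "hd xs = u" "last xs = v"
  shows "walk_dist E u v \<le> length xs - 1"
proof -
  have "length xs = Suc (length xs - 1)"
    using assms(1) by (cases xs) auto
  then show ?thesis
    unfolding walk_dist_def using assms by (intro Least_le) blast
qed

lemma shortest_walk:
  assumes "reachable E u v"
  obtains xs where "walk E xs" "hd xs = u" "last xs = v" "length xs = Suc (walk_dist E u v)"
proof -
  from assms obtain xs where xs: "walk E xs" "hd xs = u" "last xs = v"
    unfolding reachable_def by blast
  have "length xs = Suc (length xs - 1)"
    using xs(1) by (cases xs) auto
  then have "\<exists>n xs. walk E xs \<and> hd xs = u \<and> last xs = v \<and> length xs = Suc n"
    using xs by blast
  from LeastI_ex[OF this] show ?thesis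
    using that unfolding walk_dist_def by blast
qed

lemma walk_dist_refl [simp]: "walk_dist E u u = 0"
  using walk_dist_le_length[of E "[u]" u u] by simp

lemma walk_dist_edge: "E u v \<Longrightarrow> walk_dist E u v \<le> 1"
  using walk_dist_le_length[of E "[u,v]" u v] by simp

lemma walk_dist_eq_0:
  assumes "reachable E u v" "walk_dist E u v = 0"
  shows "u = v"
proof -
  obtain xs where xs: "walk E xs" "hd xs = u" "last xs = v" "length xs = Suc (walk_dist E u v)"
    using shortest_walk[OF assms(1)] by blast
  then obtain x where "xs = [x]"
    using assms(2) by (cases xs) auto
  with xs show ?thesis by simp
qed

lemma reachable_trans:
  assumes "reachable E u v" "reachable E v w"
  shows "reachable E u w"
proof -
  obtain xs ys where "walk E xs" "hd xs = u" "last xs = v" "walk E ys" "hd ys = v" "last ys = w"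
    using assms unfolding reachable_def by blast
  then show ?thesis
    unfolding reachable_def
    by (intro exI[of _ "xs @ tl ys"]) (auto simp: walk_join last_join walk_nonempty)
qed

lemma walk_dist_triangle:
  assumes "reachable E u v" "reachable E v w"
  shows "walk_dist E u w \<le> walk_dist E u v + walk_dist E v w"
proof -
  obtain xs where xs: "walk E xs" "hd xs = u" "last xs = v" "length xs = Suc (walk_dist E u v)"
    using shortest_walk[OF assms(1)] by blast
  obtain ys where ys: "walk E ys" "hd ys = v" "last ys = w" "length ys = Suc (walk_dist E v w)"
    using shortest_walk[OF assms(2)] by blast
  have "walk_dist E u w \<le> length (xs @ tl ys) - 1"
    using xs ys by (intro walk_dist_le_length) (auto simp: walk_join last_join walk_nonempty)
  with xs(4) ys(4) show ?thesis by simp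
qed

context
  fixes E :: "'v \<Rightarrow> 'v \<Rightarrow> bool"
  assumes E_sym: "\<And>u v. E u v \<Longrightarrow> E v u"
begin

lemma reachable_sym:
  assumes "reachable E u v"
  shows "reachable E v u"
proof -
  obtain xs where "walk E xs" "hd xs = u" "last xs = v"
    using assms unfolding reachable_def by blast
  then show ?thesis
    unfolding reachable_def
    by (intro exI[of _ "rev xs"]) (auto simp: walk_rev[OF E_sym] hd_rev last_rev walk_nonempty)
qed

lemma walk_dist_sym: "walk_dist E u v = walk_dist E v u"
proof (cases "reachable E u v")
  case True
  have le: "walk_dist E b a \<le> walk_dist E a b" if ab: "reachable E a b" for a b
  proof -
    obtain xs where xs: "walk E xs" "hd xs = a" "last xs = b" "length xs = Suc (walk_dist E a b)"
      using shortest_walk[OF ab] by blast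
    then have "walk_dist E b a \<le> length (rev xs) - 1"
      by (intro walk_dist_le_length walk_rev[OF E_sym]) (auto simp: hd_rev last_rev)
    with xs(4) show ?thesis by simp
  qed
  show ?thesis
    using le[OF True] le[OF reachable_sym[OF True]] by simp
next
  case False
  have no_walk: "walk_dist E a b = (LEAST n. False)" if "\<not> reachable E a b" for a b
  proof -
    have "(\<lambda>n. \<exists>xs. walk E xs \<and> hd xs = a \<and> last xs = b \<and> length xs = Suc n) = (\<lambda>n. False)"
      using that unfolding reachable_def by blast
    then show ?thesis
      unfolding walk_dist_def by simp
  qed
  have "\<not> reachable E v u"
    using False reachable_sym by blast
  then show ?thesis
    using no_walk[OF False] no_walk[of v u] by argo
qed

end

section \<open>Trees given by a parent function\<close>

locale parent_tree =
  fixes V :: "'v set" and E :: "'v \<Rightarrow> 'v \<Rightarrow> bool" and lev :: "'v \<Rightarrow> nat"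
    and par :: "'v \<Rightarrow> 'v" and r :: 'v
  assumes root_in: "r \<in> V" and lev_root: "lev r = 0"
    and lev_eq_0: "\<And>v. v \<in> V \<Longrightarrow> lev v = 0 \<Longrightarrow> v = r"
    and parent_in: "\<And>v. v \<in> V \<Longrightarrow> v \<noteq> r \<Longrightarrow> par v \<in> V"
    and lev_parent: "\<And>v. v \<in> V \<Longrightarrow> v \<noteq> r \<Longrightarrow> Suc (lev (par v)) = lev v"
    and edge_iff: "\<And>u v. E u v \<longleftrightarrow> u \<in> V \<and> v \<in> V \<and> ((v \<noteq> r \<and> u = par v) \<or> (u \<noteq> r \<and> v = par u))"
begin

lemma edge_sym: "E u v \<Longrightarrow> E v u"
  using edge_iff by blast

lemma edge_parent: "v \<in> V \<Longrightarrow> v \<noteq> r \<Longrightarrow> E v (par v)"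
  using edge_iff parent_in by blast

lemma edge_cases:
  assumes "E u v"
  shows "u \<in> V \<and> v \<in> V \<and>
    ((v \<noteq> r \<and> u = par v \<and> lev v = Suc (lev u)) \<or> (u \<noteq> r \<and> v = par u \<and> lev u = Suc (lev v)))"
  using assms edge_iff lev_parent by metis

lemma edge_lower_is_parent:
  assumes "E u v" "lev u < lev v"
  shows "u = par v"
  using edge_cases[OF assms(1)] assms(2) by auto

lemma parent_iter:
  assumes "v \<in> V" "i \<le> lev v"
  shows "(par ^^ i) v \<in> V \<and> lev ((par ^^ i) v) = lev v - i"
  using assms(2)
proof (induction i)
  case (Suc i)
  let ?w = "(par ^^ i) v"
  have w: "?w \<in> V" "lev ?w = lev v - i"
    using Suc by auto
  moreover have "?w \<noteq> r"
    using w Suc.prems lev_root by auto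
  ultimately show ?case
    using parent_in lev_parent[of ?w] by (auto simp: Suc.prems)
qed (use assms(1) in simp)

definition ancestor :: "nat \<Rightarrow> 'v \<Rightarrow> 'v" where
  "ancestor k v = (par ^^ (lev v - k)) v"

lemma ancestor_in: "v \<in> V \<Longrightarrow> k \<le> lev v \<Longrightarrow> ancestor k v \<in> V \<and> lev (ancestor k v) = k"
  unfolding ancestor_def using parent_iter[of v "lev v - k"] by auto

lemma ancestor_ancestor:
  assumes "v \<in> V" "j \<le> k" "k \<le> lev v"
  shows "ancestor j (ancestor k v) = ancestor j v"
proof -
  have "lev (ancestor k v) = k"
    using ancestor_in assms by blast
  then have "ancestor j (ancestor k v) = (par ^^ (k - j + (lev v - k))) v"
    by (simp add: ancestor_def funpow_add)
  also have "k - j + (lev v - k) = lev v - j"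
    using assms by simp
  finally show ?thesis
    by (simp add: ancestor_def)
qed

lemma ancestor_0: "v \<in> V \<Longrightarrow> ancestor 0 v = r"
  using ancestor_in[of v 0] lev_eq_0 by auto

lemma ancestor_parent:
  assumes "v \<in> V" "v \<noteq> r" "k \<le> lev (par v)"
  shows "ancestor k (par v) = ancestor k v"
proof -
  have "lev v - k = Suc (lev (par v) - k)"
    using lev_parent[OF assms(1,2)] assms(3) by simp
  then show ?thesis
    unfolding ancestor_def by (simp only: funpow_Suc_right comp_def)
qed

definition meet :: "'v \<Rightarrow> 'v \<Rightarrow> nat" where
  "meet a b = (GREATEST k. k \<le> min (lev a) (lev b) \<and> ancestor k a = ancestor k b)"

lemma meet:
  assumes "a \<in> V" "b \<in> V"
  shows "meet a b \<le> min (lev a) (lev b) \<and> ancestor (meet a b) a = ancestor (meet a b) b"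
proof -
  have "0 \<le> min (lev a) (lev b) \<and> ancestor 0 a = ancestor 0 b"
    using ancestor_0 assms by simp
  then show ?thesis
    unfolding meet_def by (rule GreatestI_nat[where b = "min (lev a) (lev b)"]) auto
qed

lemma meet_greatest:
  assumes "k \<le> min (lev a) (lev b)" "ancestor k a = ancestor k b"
  shows "k \<le> meet a b"
  unfolding meet_def using assms by (intro Greatest_le_nat[where b = "min (lev a) (lev b)"]) auto

lemma ancestor_eq_below_meet:
  assumes "a \<in> V" "b \<in> V" "j \<le> meet a b"
  shows "ancestor j a = ancestor j b"
  using meet[OF assms(1,2)] assms ancestor_ancestor[of a j "meet a b"] ancestor_ancestor[of b j "meet a b"]
  by simp

lemma meet_sym: "meet a b = meet b a"
  unfolding meet_def by (metis min.commute)

lemma meet_le: "a \<in> V \<Longrightarrow> b \<in> V \<Longrightarrow> 2 * meet a b \<le> lev a + lev b"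
  using meet by fastforce

lemma meet_ultra:
  assumes "a \<in> V" "b \<in> V" "c \<in> V"
  shows "min (meet a b) (meet b c) \<le> meet a c"
proof (rule meet_greatest)
  let ?k = "min (meet a b) (meet b c)"
  show "?k \<le> min (lev a) (lev c)"
    using meet assms by fastforce
  show "ancestor ?k a = ancestor ?k c"
    using ancestor_eq_below_meet assms by simp
qed

definition path_up :: "'v \<Rightarrow> nat \<Rightarrow> 'v list" where
  "path_up v n = map (\<lambda>i. (par ^^ i) v) [0..<Suc n]"

lemma path_up:
  assumes "v \<in> V" "n \<le> lev v"
  shows "walk E (path_up v n)" "hd (path_up v n) = v"
    "last (path_up v n) = ancestor (lev v - n) v" "length (path_up v n) = Suc n"
proof -
  show "walk E (path_up v n)"
    unfolding walk_def path_up_def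
  proof (intro conjI allI impI)
    fix i
    assume "Suc i < length (map (\<lambda>i. (par ^^ i) v) [0..<Suc n])"
    then have i: "i < n"
      by simp
    let ?w = "(par ^^ i) v"
    have "?w \<in> V" "lev ?w = lev v - i"
      using parent_iter assms i by auto
    moreover have "?w \<noteq> r"
      using i assms \<open>lev ?w = lev v - i\<close> lev_root by auto
    ultimately have "E ?w (par ?w)"
      by (simp add: edge_parent)
    then show "E (map (\<lambda>i. (par ^^ i) v) [0..<Suc n] ! i) (map (\<lambda>i. (par ^^ i) v) [0..<Suc n] ! Suc i)"
      using i by (simp del: upt_Suc add: nth_map_upt)
  qed simp
  show "hd (path_up v n) = v"
    unfolding path_up_def by (simp del: upt_Suc add: hd_map upt_rec)
  show "last (path_up v n) = ancestor (lev v - n) v"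
    unfolding path_up_def ancestor_def using assms by (simp add: last_map)
  show "length (path_up v n) = Suc n"
    unfolding path_up_def by simp
qed

lemma reachable_all:
  assumes "a \<in> V" "b \<in> V"
  shows "reachable E a b"
proof -
  have "reachable E v r" if "v \<in> V" for v
    using path_up[OF that order.refl] ancestor_0[OF that] unfolding reachable_def by auto
  then have "reachable E a r" "reachable E r b"
    using assms reachable_sym[of E, OF edge_sym] by blast+
  then show ?thesis
    by (rule reachable_trans)
qed

lemma walk_dist_le_meet:
  assumes "a \<in> V" "b \<in> V"
  shows "walk_dist E a b \<le> lev a + lev b - 2 * meet a b"
proof -
  let ?m = "meet a b"
  have m: "?m \<le> lev a" "?m \<le> lev b" "ancestor ?m a = ancestor ?m b"
    using meet assms by auto
  let ?xs = "path_up a (lev a - ?m)" and ?ys = "rev (path_up b (lev b - ?m))"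
  have xs: "walk E ?xs" "hd ?xs = a" "last ?xs = ancestor ?m a" "length ?xs = Suc (lev a - ?m)"
    using path_up[OF assms(1), of "lev a - ?m"] m by auto
  have ys_ne: "?ys \<noteq> []"
    using path_up(4)[OF assms(2), of "lev b - ?m"] by auto
  then have ys: "walk E ?ys" "hd ?ys = ancestor ?m b" "last ?ys = b" "length ?ys = Suc (lev b - ?m)"
    using path_up[OF assms(2), of "lev b - ?m"] m walk_rev[OF edge_sym] by (auto simp: hd_rev last_rev)
  have "walk_dist E a b \<le> length (?xs @ tl ?ys) - 1"
  proof (rule walk_dist_le_length)
    show "walk E (?xs @ tl ?ys)"
      using walk_join xs ys m by metis
    show "hd (?xs @ tl ?ys) = a"
      using xs by (simp add: walk_nonempty)
    show "last (?xs @ tl ?ys) = b"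
      using xs ys m ys_ne by (simp add: last_join walk_nonempty)
  qed
  then show ?thesis
    using xs(4) ys(4) m by simp
qed

lemma walk_lev_lipschitz:
  assumes "walk E xs" "i + d < length xs"
  shows "lev (xs ! i) \<le> lev (xs ! (i + d)) + d \<and> lev (xs ! (i + d)) \<le> lev (xs ! i) + d"
  using assms(2)
proof (induction d)
  case (Suc d)
  have "E (xs ! (i + d)) (xs ! Suc (i + d))"
    using walk_nth[OF assms(1)] Suc.prems by simp
  then have "lev (xs ! (i + d)) = Suc (lev (xs ! Suc (i + d))) \<or> lev (xs ! Suc (i + d)) = Suc (lev (xs ! (i + d)))"
    using edge_cases by auto
  then show ?case
    using Suc by auto
qed simp

lemma walk_dist_ge_meet:
  assumes "walk E xs" "hd xs = a" "last xs = b"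
  shows "lev a + lev b - 2 * meet a b \<le> length xs - 1"
proof -
  let ?n = "length xs"
  have ne: "xs \<noteq> []"
    using assms(1) by auto
  have a0: "xs ! 0 = a" and bn: "xs ! (?n - 1) = b"
    using assms(2,3) ne by (simp_all add: hd_conv_nth last_conv_nth)
  define j where "j = Min (lev ` set xs)"
  have j_le: "\<And>x. x \<in> set xs \<Longrightarrow> j \<le> lev x"
    unfolding j_def by simp
  have fin: "finite (lev ` set xs)" "lev ` set xs \<noteq> {}"
    using ne by auto
  obtain k where k: "k < ?n" "lev (xs ! k) = j"
    using Min_in[OF fin] unfolding j_def by (auto simp: in_set_conv_nth)
  have same_ancestor: "ancestor j (xs ! i) = ancestor j a" if "i < ?n" for i
    using that
  proof (induction i)
    case (Suc i)
    have e: "E (xs ! i) (xs ! Suc i)"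
      using walk_nth[OF assms(1)] Suc.prems by simp
    have "j \<le> lev (xs ! i)" "j \<le> lev (xs ! Suc i)"
      using j_le Suc.prems by auto
    then have "ancestor j (xs ! Suc i) = ancestor j (xs ! i)"
      using edge_cases[OF e] ancestor_parent by auto
    then show ?case
      using Suc by simp
  qed (use a0 in simp)
  have "ancestor j b = ancestor j a"
    using same_ancestor[of "?n - 1"] bn ne by simp
  moreover have "j \<le> lev a" "j \<le> lev b"
    using j_le ne assms(2,3) by auto
  ultimately have "j \<le> meet a b"
    using meet_greatest by simp
  moreover have "lev a \<le> j + k"
    using walk_lev_lipschitz[OF assms(1), of 0 k] k a0 by simp
  moreover have "lev b \<le> j + (?n - 1 - k)"
    using walk_lev_lipschitz[OF assms(1), of k "?n - 1 - k"] k bn by simp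
  ultimately show ?thesis
    using k(1) by linarith
qed

lemma walk_dist_meet:
  assumes "a \<in> V" "b \<in> V"
  shows "walk_dist E a b = lev a + lev b - 2 * meet a b"
proof -
  obtain xs where "walk E xs" "hd xs = a" "last xs = b" "length xs = Suc (walk_dist E a b)"
    using shortest_walk[OF reachable_all[OF assms]] by blast
  then show ?thesis
    using walk_dist_ge_meet walk_dist_le_meet[OF assms] by fastforce
qed

text \<open>On a cycle, a vertex of maximal level has two distinct neighbours of lower level,
  and both would have to be its parent.\<close>

lemma no_cycle:
  assumes xs: "walk E xs" "3 \<le> length xs" "distinct xs" "E (last xs) (hd xs)"
  shows False
proof -
  let ?n = "length xs"
  let ?next = "\<lambda>i. if Suc i < ?n then Suc i else 0"
  have ne: "xs \<noteq> []"
    using xs by auto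
  have cyc: "E (xs ! i) (xs ! ?next i)" if "i < ?n" for i
  proof (cases "Suc i < ?n")
    case False
    then have "i = ?n - 1"
      using that by simp
    then show ?thesis
      using xs(4) False ne by (simp add: last_conv_nth hd_conv_nth)
  qed (use walk_nth[OF xs(1)] in simp)
  have fin: "finite (lev ` set xs)" "lev ` set xs \<noteq> {}"
    using ne by auto
  obtain k where k: "k < ?n" "lev (xs ! k) = Max (lev ` set xs)"
    using Max_in[OF fin] by (auto simp: in_set_conv_nth)
  have k_max: "lev (xs ! i) \<le> lev (xs ! k)" if "i < ?n" for i
    using k that by simp
  define p where "p = (if k = 0 then ?n - 1 else k - 1)"
  have p: "p < ?n" "?next p = k" "p \<noteq> ?next k"
    using k xs(2) unfolding p_def by auto
  have lower_is_parent: "xs ! i = par (xs ! k)" if "i < ?n" "E (xs ! i) (xs ! k)" for i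
  proof (rule edge_lower_is_parent[OF that(2)])
    have "lev (xs ! i) \<noteq> lev (xs ! k)"
      using edge_cases[OF that(2)] by auto
    then show "lev (xs ! i) < lev (xs ! k)"
      using k_max[OF that(1)] by simp
  qed
  have next_k: "?next k < ?n"
    using k(1) by auto
  have "xs ! p = par (xs ! k)"
    using lower_is_parent[OF p(1)] cyc[OF p(1)] unfolding p(2) by blast
  moreover have "xs ! ?next k = par (xs ! k)"
    using lower_is_parent[OF next_k edge_sym[OF cyc[OF k(1)]]] .
  ultimately show False
    using nth_eq_iff_index_eq[OF xs(3) p(1) next_k] p(3) by simp
qed

lemma is_tree: "is_tree V E"
  unfolding is_tree_def
proof (intro conjI allI impI ballI)
  show "V \<noteq> {}"
    using root_in by auto
  show "\<exists>xs. walk E xs \<and> hd xs = u \<and> last xs = v" if "u \<in> V" "v \<in> V" for u v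
    using reachable_all[OF that] unfolding reachable_def .
  show "\<not> (\<exists>xs. walk E xs \<and> 3 \<le> length xs \<and> distinct xs \<and> E (last xs) (hd xs))"
    using no_cycle by blast
qed (use edge_cases edge_sym in fastforce)+

end

definition edge_image :: "('v \<Rightarrow> 'w) \<Rightarrow> ('v \<Rightarrow> 'v \<Rightarrow> bool) \<Rightarrow> 'w \<Rightarrow> 'w \<Rightarrow> bool" where
  "edge_image h E a b \<longleftrightarrow> (\<exists>u v. E u v \<and> a = h u \<and> b = h v)"

lemma edge_image_iff:
  assumes inj: "inj_on h V" and E_V: "\<And>u v. E u v \<Longrightarrow> u \<in> V \<and> v \<in> V" and "u \<in> V" "v \<in> V"
  shows "edge_image h E (h u) (h v) \<longleftrightarrow> E u v"
proof
  assume "edge_image h E (h u) (h v)"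
  then obtain u' v' where e: "E u' v'" "h u = h u'" "h v = h v'"
    unfolding edge_image_def by blast
  then have "u' = u" "v' = v"
    using inj_onD[OF inj] E_V[OF e(1)] assms(3,4) by metis+
  with e show "E u v"
    by simp
qed (auto simp: edge_image_def)

lemma locally_finite_edge_image:
  assumes inj: "inj_on h V" and E_V: "\<And>u v. E u v \<Longrightarrow> u \<in> V"
    and fin: "\<And>u. u \<in> V \<Longrightarrow> finite {v. E u v}"
  shows "locally_finite_graph (h ` V) (edge_image h E)"
  unfolding locally_finite_graph_def
proof
  fix a
  assume "a \<in> h ` V"
  then obtain u where u: "u \<in> V" "a = h u"
    by blast
  have "{b. edge_image h E a b} \<subseteq> h ` {v. E u v}"
  proof
    fix b
    assume "b \<in> {b. edge_image h E a b}"
    then obtain u' v where e: "E u' v" "a = h u'" "b = h v"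
      unfolding edge_image_def by blast
    then have "u' = u"
      using inj_onD[OF inj] u E_V[OF e(1)] by simp
    with e show "b \<in> h ` {v. E u v}"
      by blast
  qed
  then show "finite {b. edge_image h E a b}"
    using fin[OF u(1)] finite_subset by blast
qed

context parent_tree
begin

lemma parent_tree_image:
  assumes inj: "inj_on h V"
  shows "parent_tree (h ` V) (edge_image h E)
    (\<lambda>a. lev (inv_into V h a)) (\<lambda>a. h (par (inv_into V h a))) (h r)"
proof
  have inv: "\<And>v. v \<in> V \<Longrightarrow> inv_into V h (h v) = v"
    using inj by (simp add: inv_into_f_f)
  show "h r \<in> h ` V" "lev (inv_into V h (h r)) = 0"
    using inv root_in lev_root by simp_all
  fix a
  assume "a \<in> h ` V"
  then obtain v where v: "v \<in> V" "a = h v"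
    by blast
  show "lev (inv_into V h a) = 0 \<Longrightarrow> a = h r"
    using v inv lev_eq_0 by simp
  assume "a \<noteq> h r"
  then have "v \<noteq> r"
    using v by auto
  then show "h (par (inv_into V h a)) \<in> h ` V"
    and "Suc (lev (inv_into V h (h (par (inv_into V h a))))) = lev (inv_into V h a)"
    using v inv parent_in lev_parent by simp_all
next
  fix a b
  show "edge_image h E a b \<longleftrightarrow> a \<in> h ` V \<and> b \<in> h ` V \<and>
    ((b \<noteq> h r \<and> a = h (par (inv_into V h b))) \<or> (a \<noteq> h r \<and> b = h (par (inv_into V h a))))"
  proof (cases "a \<in> h ` V \<and> b \<in> h ` V")
    case True
    then obtain u v where uv: "u \<in> V" "v \<in> V" "a = h u" "b = h v"
      by blast
    have h_eq: "\<And>x y. x \<in> V \<Longrightarrow> y \<in> V \<Longrightarrow> h x = h y \<longleftrightarrow> x = y"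
      using inj by (simp add: inj_on_eq_iff)
    have "edge_image h E a b \<longleftrightarrow> E u v"
      unfolding uv(3,4) using edge_image_iff[OF inj _ uv(1,2)] edge_cases by blast
    also have "\<dots> \<longleftrightarrow> (v \<noteq> r \<and> u = par v) \<or> (u \<noteq> r \<and> v = par u)"
      using edge_iff uv(1,2) by blast
    also have "\<dots> \<longleftrightarrow> (h v \<noteq> h r \<and> h u = h (par v)) \<or> (h u \<noteq> h r \<and> h v = h (par u))"
      using h_eq uv(1,2) root_in parent_in by auto
    finally show ?thesis
      using True uv inv_into_f_f[OF inj] by simp
  next
    case False
    then show ?thesis
      unfolding edge_image_def using edge_cases by blast
  qed
qed

lemma walk_dist_image:
  assumes inj: "inj_on h V" and a: "a \<in> V" and b: "b \<in> V"
  shows "walk_dist (edge_image h E) (h a) (h b) = walk_dist E a b"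
proof -
  interpret H: parent_tree "h ` V" "edge_image h E"
    "\<lambda>a. lev (inv_into V h a)" "\<lambda>a. h (par (inv_into V h a))" "h r"
    by (rule parent_tree_image[OF inj])
  have inv: "\<And>v. v \<in> V \<Longrightarrow> inv_into V h (h v) = v"
    using inj by (simp add: inv_into_f_f)
  have iter: "((\<lambda>a. h (par (inv_into V h a))) ^^ i) (h v) = h ((par ^^ i) v)"
    if "v \<in> V" "i \<le> lev v" for v i
    using that(2)
  proof (induction i)
    case (Suc i)
    have "(par ^^ i) v \<in> V"
      using parent_iter[OF that(1)] Suc.prems by simp
    then show ?case
      using Suc inv by simp
  qed simp
  have ancestor: "H.ancestor k (h v) = h (ancestor k v)" if "v \<in> V" "k \<le> lev v" for v k
    unfolding H.ancestor_def ancestor_def using iter[OF that(1), of "lev v - k"] inv[OF that(1)] by simp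
  have "(k \<le> min (lev (inv_into V h (h a))) (lev (inv_into V h (h b))) \<and> H.ancestor k (h a) = H.ancestor k (h b))
      \<longleftrightarrow> (k \<le> min (lev a) (lev b) \<and> ancestor k a = ancestor k b)" for k
  proof (cases "k \<le> min (lev a) (lev b)")
    case True
    have "ancestor k a \<in> V" "ancestor k b \<in> V"
      using ancestor_in a b True by auto
    then have "h (ancestor k a) = h (ancestor k b) \<longleftrightarrow> ancestor k a = ancestor k b"
      by (rule inj_on_eq_iff[OF inj])
    then show ?thesis
      using True ancestor[OF a] ancestor[OF b] inv a b by simp
  qed (use inv a b in auto)
  then have "H.meet (h a) (h b) = meet a b"
    unfolding H.meet_def meet_def by simp
  then show ?thesis
    using H.walk_dist_meet[of "h a" "h b"] walk_dist_meet[OF a b] a b inv by simp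
qed

end

section \<open>Every rooted tree is given by a parent function\<close>

lemma in_set_dropD:
  assumes "x \<in> set (drop i xs)"
  shows "\<exists>k. i \<le> k \<and> k < length xs \<and> x = xs ! k"
proof -
  obtain j where "j < length (drop i xs)" "drop i xs ! j = x"
    using assms by (auto simp: in_set_conv_nth)
  then show ?thesis
    by (intro exI[of _ "i + j"]) auto
qed

lemma tree_edgeD: "is_tree V E \<Longrightarrow> E u v \<Longrightarrow> u \<in> V \<and> v \<in> V \<and> u \<noteq> v \<and> E v u"
  unfolding is_tree_def by blast

lemma tree_reachable: "is_tree V E \<Longrightarrow> u \<in> V \<Longrightarrow> v \<in> V \<Longrightarrow> reachable E u v"
  unfolding is_tree_def reachable_def by blast

locale rooted_tree =
  fixes V :: "'v set" and E :: "'v \<Rightarrow> 'v \<Rightarrow> bool" and r :: 'v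
  assumes tree: "is_tree V E" and root_in: "r \<in> V"
begin

lemma edge_in_V: "E u v \<Longrightarrow> u \<in> V \<and> v \<in> V \<and> u \<noteq> v \<and> E v u"
  using tree_edgeD[OF tree] .

lemma edge_sym: "E u v \<Longrightarrow> E v u"
  using edge_in_V by blast

lemma reachable_V: "u \<in> V \<Longrightarrow> v \<in> V \<Longrightarrow> reachable E u v"
  using tree_reachable[OF tree] .

lemma acyclic: "walk E xs \<Longrightarrow> 3 \<le> length xs \<Longrightarrow> distinct xs \<Longrightarrow> E (last xs) (hd xs) \<Longrightarrow> False"
  using tree unfolding is_tree_def by blast

definition depth :: "'v \<Rightarrow> nat" where
  "depth v = walk_dist E r v"

lemma depth_root: "depth r = 0"
  unfolding depth_def by simp

lemma depth_le: "u \<in> V \<Longrightarrow> v \<in> V \<Longrightarrow> depth v \<le> depth u + walk_dist E u v"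
  unfolding depth_def by (rule walk_dist_triangle[OF reachable_V[OF root_in] reachable_V])

lemma depth_edge:
  assumes "E u v"
  shows "depth v \<le> Suc (depth u)"
proof -
  have "depth v \<le> depth u + walk_dist E u v"
    using edge_in_V[OF assms] depth_le by blast
  then show ?thesis
    using walk_dist_edge[of E u v, OF assms] by simp
qed

lemma walk_in_V:
  assumes "walk E xs" "hd xs \<in> V" "x \<in> set xs"
  shows "x \<in> V"
proof -
  obtain i where i: "i < length xs" "xs ! i = x"
    using assms(3) by (auto simp: in_set_conv_nth)
  show "x \<in> V"
  proof (cases i)
    case 0
    then show ?thesis
      using assms(2) i by (simp add: hd_conv_nth walk_nonempty[OF assms(1)])
  next
    case (Suc j)
    then have "E (xs ! j) (xs ! Suc j)"
      using walk_nth[OF assms(1), of j] i by simp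
    then show ?thesis
      using edge_in_V i Suc by auto
  qed
qed

definition root_geodesic :: "'v list \<Rightarrow> bool" where
  "root_geodesic P \<longleftrightarrow> walk E P \<and> hd P = r \<and> length P = Suc (depth (last P))"

lemma root_geodesic_exists:
  assumes "v \<in> V"
  obtains P where "root_geodesic P" "last P = v"
proof -
  obtain P where "walk E P" "hd P = r" "last P = v" "length P = Suc (walk_dist E r v)"
    using shortest_walk[OF reachable_V[OF root_in assms]] by blast
  then show ?thesis
    using that unfolding root_geodesic_def depth_def by simp
qed

lemma root_geodesic_depth:
  assumes P: "root_geodesic P" and k: "k < length P"
  shows "depth (P ! k) = k"
proof -
  have w: "walk E P" and h: "hd P = r" and l: "length P = Suc (depth (last P))"
    using P unfolding root_geodesic_def by auto
  have ne: "P \<noteq> []"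
    using k by auto
  have "P ! k \<in> V" "last P \<in> V"
    using walk_in_V[OF w] h root_in k ne by auto
  have "walk E (take (Suc k) P)"
    using walk_take[OF w] by simp
  moreover have "hd (take (Suc k) P) = r"
    using h ne by (cases P) auto
  moreover have "last (take (Suc k) P) = P ! k"
    using k by (simp add: take_Suc_conv_app_nth)
  ultimately have "depth (P ! k) \<le> length (take (Suc k) P) - 1"
    unfolding depth_def by (rule walk_dist_le_length)
  moreover have "walk_dist E (P ! k) (last P) \<le> length (drop k P) - 1"
    using walk_drop[OF w k] k by (intro walk_dist_le_length) (auto simp: hd_drop_conv_nth)
  then have "depth (last P) \<le> depth (P ! k) + (length P - 1 - k)"
    using depth_le[OF \<open>P ! k \<in> V\<close> \<open>last P \<in> V\<close>] by simp
  ultimately show ?thesis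
    using l k by simp
qed

lemma root_geodesic_distinct:
  assumes "root_geodesic P"
  shows "distinct P"
  unfolding distinct_conv_nth
proof (intro allI impI)
  fix i j
  assume "i < length P" "j < length P" "i \<noteq> j"
  then show "P ! i \<noteq> P ! j"
    using root_geodesic_depth[OF assms, of i] root_geodesic_depth[OF assms, of j] by auto
qed

lemma root_geodesic_set_drop:
  assumes "root_geodesic P" "x \<in> set (drop i P)"
  obtains k where "i \<le> k" "k < length P" "x = P ! k" "depth x = k"
proof -
  obtain k where "i \<le> k" "k < length P" "x = P ! k"
    using in_set_dropD[OF assms(2)] by blast
  with root_geodesic_depth[OF assms(1)] that show ?thesis
    by blast
qed

lemma root_geodesics_branch:
  assumes P: "root_geodesic P" and Q: "root_geodesic Q"
    and lengths: "length P = Suc n" "length Q = Suc n" and ends: "P ! n \<noteq> Q ! n"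
  obtains i where "i < n" "P ! i = Q ! i" "\<And>k. i < k \<Longrightarrow> k \<le> n \<Longrightarrow> P ! k \<noteq> Q ! k"
proof -
  have "P \<noteq> []" "Q \<noteq> []"
    using lengths by auto
  then have "P ! 0 = Q ! 0"
    using P Q unfolding root_geodesic_def by (simp add: hd_conv_nth[symmetric])
  define i where "i = (GREATEST k. k \<le> n \<and> P ! k = Q ! k)"
  have i: "i \<le> n" "P ! i = Q ! i"
    using GreatestI_nat[of "\<lambda>k. k \<le> n \<and> P ! k = Q ! k" 0 n] \<open>P ! 0 = Q ! 0\<close> unfolding i_def by auto
  have i_max: "k \<le> i" if "k \<le> n" "P ! k = Q ! k" for k
    unfolding i_def using that by (intro Greatest_le_nat[where b = n]) auto
  show ?thesis
  proof (rule that)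
    show "i < n"
      using i ends le_neq_implies_less by blast
    show "P ! i = Q ! i"
      by (rule i(2))
    show "P ! k \<noteq> Q ! k" if "i < k" "k \<le> n" for k
      using i_max[OF that(2)] that(1) by auto
  qed
qed

lemma detour_distinct:
  assumes P: "root_geodesic P" and Q: "root_geodesic Q"
    and lengths: "length P = Suc n" "length Q = Suc n"
    and apart: "\<And>k. i < k \<Longrightarrow> k \<le> n \<Longrightarrow> P ! k \<noteq> Q ! k"
    and L: "distinct L" "\<forall>x\<in>set L. depth x > n"
  shows "distinct (drop i P @ L @ rev (drop (Suc i) Q))"
proof -
  let ?A = "drop i P" and ?B = "rev (drop (Suc i) Q)"
  have "set ?A \<inter> set L = {}"
  proof (rule ccontr)
    assume "set ?A \<inter> set L \<noteq> {}"
    then obtain x where x: "x \<in> set ?A" "x \<in> set L"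
      by blast
    obtain k where "i \<le> k" "k < length P" "x = P ! k" "depth x = k"
      by (rule root_geodesic_set_drop[OF P x(1)])
    then show False
      using L(2) x(2) lengths by fastforce
  qed
  moreover have "set L \<inter> set ?B = {}"
  proof (rule ccontr)
    assume "set L \<inter> set ?B \<noteq> {}"
    then obtain x where x: "x \<in> set (drop (Suc i) Q)" "x \<in> set L"
      by auto
    obtain k where "Suc i \<le> k" "k < length Q" "x = Q ! k" "depth x = k"
      by (rule root_geodesic_set_drop[OF Q x(1)])
    then show False
      using L(2) x(2) lengths by fastforce
  qed
  moreover have "set ?A \<inter> set ?B = {}"
  proof (rule ccontr)
    assume "set ?A \<inter> set ?B \<noteq> {}"
    then obtain x where x: "x \<in> set ?A" "x \<in> set (drop (Suc i) Q)"
      by auto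
    obtain k where k: "i \<le> k" "k < length P" "x = P ! k" "depth x = k"
      by (rule root_geodesic_set_drop[OF P x(1)])
    obtain k' where k': "Suc i \<le> k'" "k' < length Q" "x = Q ! k'" "depth x = k'"
      by (rule root_geodesic_set_drop[OF Q x(2)])
    show False
      using apart[of k] k k' lengths by simp
  qed
  ultimately show ?thesis
    using root_geodesic_distinct[OF P] root_geodesic_distinct[OF Q] L(1) by auto
qed

text \<open>The walk closes a cycle with the two shortest walks from the root back to their branch point.\<close>

lemma no_deep_detour:
  assumes P: "root_geodesic P" and Q: "root_geodesic Q" and a: "last P = a" and b: "last Q = b"
    and same_depth: "depth a = depth b" and "a \<noteq> b"
    and L: "walk E (a # L @ [b])" "distinct L" "\<forall>x\<in>set L. depth x > depth a"
  shows False
proof -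
  let ?n = "depth a"
  have lengths: "length P = Suc ?n" "length Q = Suc ?n"
    using P Q a b same_depth unfolding root_geodesic_def by auto
  then have "P \<noteq> []" "Q \<noteq> []"
    by auto
  then have "P ! ?n \<noteq> Q ! ?n"
    using a b lengths \<open>a \<noteq> b\<close> by (simp add: last_conv_nth)
  then obtain i where i: "i < ?n" "P ! i = Q ! i"
    and apart: "\<And>k. i < k \<Longrightarrow> k \<le> ?n \<Longrightarrow> P ! k \<noteq> Q ! k"
    using root_geodesics_branch[OF P Q lengths] by blast
  let ?A = "drop i P" and ?B = "rev (drop (Suc i) Q)"
  have wP: "walk E P" and wQ: "walk E Q"
    using P Q unfolding root_geodesic_def by auto
  have A: "walk E ?A" "hd ?A = Q ! i" "last ?A = a"
    using walk_drop[OF wP] i lengths a by (auto simp: hd_drop_conv_nth)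
  have B_ne: "drop (Suc i) Q \<noteq> []"
    using i lengths by simp
  have B: "walk E ?B" "hd ?B = b" "last ?B = Q ! Suc i"
    using walk_rev[OF edge_sym walk_drop[OF wQ]] B_ne i lengths b
    by (auto simp: hd_rev last_rev hd_drop_conv_nth)
  define C where "C = ?A @ L @ ?B"
  have "(a # L @ [b]) @ tl ?B = a # L @ ?B"
    using B_ne B(2) by (cases ?B) auto
  then have "walk E (a # L @ ?B)"
    using walk_join[OF L(1) B(1)] B(2) by simp
  then have "walk E C"
    using walk_join[OF A(1)] A(3) unfolding C_def by fastforce
  moreover have "3 \<le> length C"
    unfolding C_def using i lengths by simp
  moreover have "E (last C) (hd C)"
    using walk_nth[OF wQ, of i] i lengths A(2) B(3) B_ne edge_sym unfolding C_def by simp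
  moreover have "distinct C"
    unfolding C_def using detour_distinct[OF P Q lengths apart L(2,3)] .
  ultimately show False
    using acyclic by blast
qed

lemma depth_edge_neq:
  assumes "E a b"
  shows "depth a \<noteq> depth b"
proof
  assume "depth a = depth b"
  moreover obtain P where "root_geodesic P" "last P = a"
    using root_geodesic_exists edge_in_V[OF assms] by blast
  moreover obtain Q where "root_geodesic Q" "last Q = b"
    using root_geodesic_exists edge_in_V[OF assms] by blast
  ultimately show False
    using no_deep_detour[of P Q a b "[]"] assms edge_in_V by simp
qed

lemma lower_neighbour_unique:
  assumes "E a v" "E b v" "Suc (depth a) = depth v" "Suc (depth b) = depth v"
  shows "a = b"
proof (rule ccontr)
  assume "a \<noteq> b"
  moreover obtain P where "root_geodesic P" "last P = a"
    using root_geodesic_exists edge_in_V[OF assms(1)] by blast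
  moreover obtain Q where "root_geodesic Q" "last Q = b"
    using root_geodesic_exists edge_in_V[OF assms(2)] by blast
  moreover have "walk E (a # [v] @ [b])"
    using assms edge_sym by simp
  ultimately show False
    using no_deep_detour[of P Q a b "[v]"] assms by simp
qed

lemma lower_neighbour_exists:
  assumes "v \<in> V" "v \<noteq> r"
  shows "\<exists>u. E u v \<and> Suc (depth u) = depth v"
proof -
  obtain P where P: "root_geodesic P" "last P = v"
    using root_geodesic_exists assms(1) by blast
  have lP: "length P = Suc (depth v)"
    using P unfolding root_geodesic_def by simp
  have "depth v \<noteq> 0"
    using walk_dist_eq_0[OF reachable_V[OF root_in assms(1)]] assms(2) unfolding depth_def by auto
  then obtain m where m: "depth v = Suc m"
    using not0_implies_Suc by blast
  have "E (P ! m) (P ! Suc m)"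
    using walk_nth[of E P m] P lP m unfolding root_geodesic_def by simp
  moreover have "P ! Suc m = v"
    using P(2) lP m last_conv_nth[of P] by force
  moreover have "depth (P ! m) = m"
    using root_geodesic_depth[OF P(1)] lP m by simp
  ultimately show ?thesis
    using m by auto
qed

definition parent :: "'v \<Rightarrow> 'v" where
  "parent v = (SOME u. E u v \<and> Suc (depth u) = depth v)"

lemma parent: "v \<in> V \<Longrightarrow> v \<noteq> r \<Longrightarrow> E (parent v) v \<and> Suc (depth (parent v)) = depth v"
  unfolding parent_def using lower_neighbour_exists by (rule someI_ex)

lemma edge_depth_cases:
  assumes "E u v"
  shows "Suc (depth u) = depth v \<or> Suc (depth v) = depth u"
  using depth_edge_neq[OF assms] depth_edge[OF assms] depth_edge[OF edge_sym[OF assms]] by linarith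

lemma parent_tree: "parent_tree V E depth parent r"
proof
  show "r \<in> V" "depth r = 0"
    by (simp_all add: root_in depth_root)
  show "v = r" if "v \<in> V" "depth v = 0" for v
    using that walk_dist_eq_0[OF reachable_V[OF root_in that(1)]] unfolding depth_def by simp
  show "parent v \<in> V" "Suc (depth (parent v)) = depth v" if "v \<in> V" "v \<noteq> r" for v
    using parent[OF that] edge_in_V by auto
  show "E u v \<longleftrightarrow> u \<in> V \<and> v \<in> V \<and> ((v \<noteq> r \<and> u = parent v) \<or> (u \<noteq> r \<and> v = parent u))" for u v
  proof
    assume e: "E u v"
    then have V: "u \<in> V" "v \<in> V"
      using edge_in_V by auto
    from edge_depth_cases[OF e] show "u \<in> V \<and> v \<in> V \<and> ((v \<noteq> r \<and> u = parent v) \<or> (u \<noteq> r \<and> v = parent u))"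
    proof
      assume h: "Suc (depth u) = depth v"
      then have "v \<noteq> r"
        using depth_root by auto
      then have "u = parent v"
        using lower_neighbour_unique[OF e, of "parent v"] parent V h by auto
      with V \<open>v \<noteq> r\<close> show ?thesis by simp
    next
      assume h: "Suc (depth v) = depth u"
      then have "u \<noteq> r"
        using depth_root by auto
      then have "v = parent u"
        using lower_neighbour_unique[OF edge_sym[OF e], of "parent u"] parent V h by auto
      with V \<open>u \<noteq> r\<close> show ?thesis by simp
    qed
  next
    assume "u \<in> V \<and> v \<in> V \<and> ((v \<noteq> r \<and> u = parent v) \<or> (u \<noteq> r \<and> v = parent u))"
    then show "E u v"
      using parent edge_sym by blast
  qed
qed

end

section \<open>Trees are 0-hyperbolic\<close>

definition gromov_product :: "('v \<Rightarrow> 'v \<Rightarrow> real) \<Rightarrow> 'v \<Rightarrow> 'v \<Rightarrow> 'v \<Rightarrow> real" where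
  "gromov_product d q a b = (d q a + d q b - d a b) / 2"

lemma gromov_product_dist: "d a b = d q a + d q b - 2 * gromov_product d q a b"
  unfolding gromov_product_def by (simp add: field_simps)

lemma min_four_point:
  fixes qa qb qc ab bc ac l :: real
  assumes "min ab bc \<le> ac" "min qa ab \<le> qb" "min qa qc \<le> ac" "min bc qc \<le> qb"
  shows "min (l - qa - qb + ab) (l - qb - qc + bc) \<le> l - qa - qc + ac"
  using assms by (auto simp: min_def split: if_splits)

context parent_tree
begin

lemma gdist_meet:
  assumes "a \<in> V" "b \<in> V"
  shows "gdist E a b = real (lev a) + real (lev b) - 2 * real (meet a b)"
  using walk_dist_meet[OF assms] meet_le[OF assms] by (simp add: gdist_eq_walk_dist of_nat_diff)

lemma gromov_product_ultra:
  assumes "q \<in> V" "a \<in> V" "b \<in> V" "c \<in> V"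
  shows "min (gromov_product (gdist E) q a b) (gromov_product (gdist E) q b c)
    \<le> gromov_product (gdist E) q a c"
proof -
  let ?m = "\<lambda>x y. real (meet x y)"
  have gp: "gromov_product (gdist E) q x y = real (lev q) - ?m q x - ?m q y + ?m x y"
    if "x \<in> V" "y \<in> V" for x y
    unfolding gromov_product_def using gdist_meet that assms(1) by simp
  have ultra: "min (?m x y) (?m y z) \<le> ?m x z" if "x \<in> V" "y \<in> V" "z \<in> V" for x y z
    using meet_ultra[OF that] by linarith
  show ?thesis
    unfolding gp[OF assms(2,3)] gp[OF assms(3,4)] gp[OF assms(2,4)]
    by (rule min_four_point)
      (use ultra[OF assms(2,3,4)] ultra[OF assms(1,2,3)] ultra[OF assms(2,1,4)] ultra[OF assms(3,4,1)]
        meet_sym in auto)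
qed

end

lemma tree_gromov_product_ultra:
  assumes "is_tree V E" "q \<in> V" "a \<in> V" "b \<in> V" "c \<in> V"
  shows "min (gromov_product (gdist E) q a b) (gromov_product (gdist E) q b c)
    \<le> gromov_product (gdist E) q a c"
proof -
  interpret rooted_tree V E q
    using assms(1,2) by unfold_locales
  interpret parent_tree V E depth parent q
    by (rule parent_tree)
  show ?thesis
    using gromov_product_ultra assms(2-5) .
qed

section \<open>The geometric realisation of a tree\<close>

lemma tree_dist_vertex_approx:
  assumes tree: "is_tree V E"
    and p: "(u, v, s) \<in> tree_points V E" and q: "(c, d, t) \<in> tree_points V E"
  shows "tree_dist E (u, v, s) (c, d, t) \<le> gdist E u c + 2"
    and "gdist E u c \<le> tree_dist E (u, v, s) (c, d, t) + 2"
proof -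
  have ps: "u \<in> V" "v \<in> V" "0 \<le> s" "s \<le> 1" "walk_dist E u v \<le> 1"
    using p tree_edgeD[OF tree] walk_dist_edge[of E u v] unfolding tree_points_def by auto
  have qs: "c \<in> V" "d \<in> V" "0 \<le> t" "t \<le> 1" "walk_dist E d c \<le> 1"
    using q tree_edgeD[OF tree] walk_dist_edge[of E d c] unfolding tree_points_def by auto
  define via where "via = min (min (s + gdist E u c + t) (s + gdist E u d + (1 - t)))
    (min ((1 - s) + gdist E v c + t) ((1 - s) + gdist E v d + (1 - t)))"
  have td: "tree_dist E (u, v, s) (c, d, t) = (if (u,v) = (c,d) then min \<bar>s - t\<bar> via
      else if (u,v) = (d,c) then min \<bar>s - (1 - t)\<bar> via else via)"
    unfolding tree_dist_def via_def Let_def by simp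
  have "via \<le> gdist E u c + 2"
    unfolding via_def using ps qs by linarith
  moreover have "tree_dist E (u, v, s) (c, d, t) \<le> via"
    unfolding td by auto
  ultimately show "tree_dist E (u, v, s) (c, d, t) \<le> gdist E u c + 2"
    by linarith
  have tri: "real (walk_dist E x z) \<le> real (walk_dist E x y) + real (walk_dist E y z)"
    if "x \<in> V" "y \<in> V" "z \<in> V" for x y z
    using walk_dist_triangle[OF tree_reachable[OF tree] tree_reachable[OF tree], of x y z] that by simp
  have "gdist E u c \<le> via + 2"
    unfolding via_def gdist_eq_walk_dist
    using tri[of u d c] tri[of u v c] tri[of u v d] tri[of v d c] ps qs by (simp add: min_def; linarith)
  moreover have "(u,v) = (c,d) \<Longrightarrow> gdist E u c = 0"
    by (simp add: gdist_eq_walk_dist)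
  moreover have "(u,v) = (d,c) \<Longrightarrow> gdist E u c \<le> 1"
    using ps by (simp add: gdist_eq_walk_dist)
  ultimately show "gdist E u c \<le> tree_dist E (u, v, s) (c, d, t) + 2"
    unfolding td by (auto simp: min_def)
qed

lemma qi_map_vertex_projection:
  assumes tree: "is_tree V E" and qi: "qi_map K C (UNIV :: 'a::metric_space set) dist (tree_points V E) (tree_dist E) f"
  shows "fst (f x) \<in> V"
    and "dist x y / K - (C + 2) \<le> gdist E (fst (f x)) (fst (f y))"
    and "gdist E (fst (f x)) (fst (f y)) \<le> K * dist x y + (C + 2)"
proof -
  have f_in: "f z \<in> tree_points V E" for z
    using qi unfolding qi_map_def by auto
  obtain u v s where fx: "f x = (u, v, s)"
    by (cases "f x") auto
  obtain c d t where fy: "f y = (c, d, t)"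
    by (cases "f y") auto
  show "fst (f x) \<in> V"
    using f_in[of x] tree_edgeD[OF tree] unfolding fx tree_points_def by auto
  have "dist x y / K - C \<le> tree_dist E (f x) (f y)" "tree_dist E (f x) (f y) \<le> K * dist x y + C"
    using qi unfolding qi_map_def by auto
  then show "dist x y / K - (C + 2) \<le> gdist E (fst (f x)) (fst (f y))"
    and "gdist E (fst (f x)) (fst (f y)) \<le> K * dist x y + (C + 2)"
    using tree_dist_vertex_approx[OF tree, of u v s c d t] f_in[of x] f_in[of y] unfolding fx fy by auto
qed

lemma qi_map_vertex_embedding:
  assumes tree: "is_tree W F" and in_W: "\<And>x. \<phi> x \<in> W"
    and close: "\<And>x y. \<bar>gdist F (\<phi> x) (\<phi> y) - dist x y\<bar> \<le> C"
    and onto: "\<And>w. w \<in> W \<Longrightarrow> \<exists>x. \<phi> x = w" and "0 \<le> C"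
  shows "qi_map 1 (C + 2) (UNIV :: 'a::metric_space set) dist (tree_points W F) (tree_dist F)
    (\<lambda>x. (\<phi> x, \<phi> x, 0))"
proof -
  have vertex: "(\<phi> x, \<phi> x, 0) \<in> tree_points W F" for x
    using in_W[of x] unfolding tree_points_def by simp
  show ?thesis
    unfolding qi_map_def
  proof (intro conjI ballI)
    show "(\<lambda>x. (\<phi> x, \<phi> x, 0)) ` UNIV \<subseteq> tree_points W F"
      using vertex by auto
    fix x y :: 'a
    show "dist x y / 1 - (C + 2) \<le> tree_dist F (\<phi> x, \<phi> x, 0) (\<phi> y, \<phi> y, 0)"
    and "tree_dist F (\<phi> x, \<phi> x, 0) (\<phi> y, \<phi> y, 0) \<le> 1 * dist x y + (C + 2)"
    using tree_dist_vertex_approx[OF tree vertex vertex, of x y] close[of x y] by auto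
next
  fix p
  assume p: "p \<in> tree_points W F"
  obtain a b t where abt: "p = (a, b, t)"
    by (cases p) auto
  have "a \<in> W"
    using p tree_edgeD[OF tree] unfolding abt tree_points_def by auto
  then obtain x where "\<phi> x = a"
    using onto by blast
  then have "tree_dist F p (\<phi> x, \<phi> x, 0) \<le> 2"
    using tree_dist_vertex_approx(1)[OF tree, of a b t "\<phi> x" "\<phi> x" 0] p vertex[of x]
    unfolding abt by (simp add: gdist_eq_walk_dist)
  then show "\<exists>x\<in>UNIV. tree_dist F p (\<phi> x, \<phi> x, 0) \<le> C + 2"
    using \<open>0 \<le> C\<close> by (intro bexI[of _ x]) auto
qed
qed

section \<open>Geodesics and chains of unit steps\<close>

definition is_geodesic :: "(real \<Rightarrow> 'a::metric_space) \<Rightarrow> 'a \<Rightarrow> 'a \<Rightarrow> bool" where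
  "is_geodesic \<gamma> x y \<longleftrightarrow> \<gamma> 0 = x \<and> \<gamma> (dist x y) = y \<and>
     (\<forall>s\<in>{0..dist x y}. \<forall>t\<in>{0..dist x y}. dist (\<gamma> s) (\<gamma> t) = \<bar>s - t\<bar>)"

lemma geodesic_exists: "geodesic_space TYPE('a::metric_space) \<Longrightarrow> \<exists>\<gamma>. is_geodesic \<gamma> (x::'a) y"
  unfolding geodesic_space_def is_geodesic_def by blast

lemma is_geodesic_ends: "is_geodesic \<gamma> x y \<Longrightarrow> \<gamma> 0 = x \<and> \<gamma> (dist x y) = y"
  unfolding is_geodesic_def by blast

lemma is_geodesic_dist:
  assumes "is_geodesic \<gamma> x y" "0 \<le> a" "a \<le> dist x y" "0 \<le> b" "b \<le> dist x y"
  shows "dist (\<gamma> a) (\<gamma> b) = \<bar>a - b\<bar>"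
  using assms unfolding is_geodesic_def by auto

abbreviation unit_chain :: "'a::metric_space list \<Rightarrow> bool" where
  "unit_chain \<equiv> walk (\<lambda>u v. dist u v \<le> 1)"

lemma unit_chain_rev: "unit_chain zs \<Longrightarrow> unit_chain (rev zs)"
  by (rule walk_rev) (auto simp: dist_commute)

definition sample_count :: "real \<Rightarrow> real \<Rightarrow> nat" where
  "sample_count a b = nat \<lceil>b - a\<rceil> + 1"

definition samples :: "(real \<Rightarrow> 'a) \<Rightarrow> real \<Rightarrow> real \<Rightarrow> 'a list" where
  "samples \<gamma> a b = map (\<lambda>i. \<gamma> (a + (b - a) * real i / real (sample_count a b))) [0..<Suc (sample_count a b)]"

lemma samples_param:
  assumes "a \<le> b" "i \<le> sample_count a b"
  shows "a \<le> a + (b - a) * real i / real (sample_count a b)"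
    and "a + (b - a) * real i / real (sample_count a b) \<le> b"
proof -
  have N: "real (sample_count a b) > 0"
    by (simp add: sample_count_def)
  have "(b - a) * (real i / real (sample_count a b)) \<le> (b - a) * 1"
    using assms N by (intro mult_left_mono) auto
  then show "a + (b - a) * real i / real (sample_count a b) \<le> b"
    by simp
  show "a \<le> a + (b - a) * real i / real (sample_count a b)"
    using assms(1) by simp
qed

lemma samples_ends: "hd (samples \<gamma> a b) = \<gamma> a" "last (samples \<gamma> a b) = \<gamma> b"
proof -
  show "hd (samples \<gamma> a b) = \<gamma> a"
    unfolding samples_def by (simp del: upt_Suc add: upt_rec)
  have "real (sample_count a b) \<noteq> 0"
    by (simp add: sample_count_def)
  then show "last (samples \<gamma> a b) = \<gamma> b"
    unfolding samples_def by (simp add: last_map)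
qed

lemma samples_ne: "samples \<gamma> a b \<noteq> []"
  unfolding samples_def by simp

lemma samples_set:
  assumes "a \<le> b" "z \<in> set (samples \<gamma> a b)"
  obtains \<sigma> where "a \<le> \<sigma>" "\<sigma> \<le> b" "z = \<gamma> \<sigma>"
proof -
  obtain i where "i < Suc (sample_count a b)" "z = \<gamma> (a + (b - a) * real i / real (sample_count a b))"
    using assms(2) unfolding samples_def by (auto simp del: upt_Suc)
  then show ?thesis
    using samples_param[OF assms(1), of i] that[of "a + (b - a) * real i / real (sample_count a b)"]
    by simp
qed

lemma samples_unit_chain:
  assumes g: "is_geodesic \<gamma> x y" and ab: "0 \<le> a" "a \<le> b" "b \<le> dist x y"
  shows "unit_chain (samples \<gamma> a b)"
  unfolding walk_def
proof (intro conjI allI impI)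
  show "samples \<gamma> a b \<noteq> []"
    by (rule samples_ne)
  fix i
  assume i: "Suc i < length (samples \<gamma> a b)"
  let ?N = "sample_count a b"
  let ?s = "a + (b - a) * real i / real ?N" and ?t = "a + (b - a) * real (Suc i) / real ?N"
  have iN: "Suc i \<le> ?N"
    using i unfolding samples_def by simp
  have N: "real ?N > 0" "b - a \<le> real ?N"
    unfolding sample_count_def by linarith+
  have "?t - ?s = (b - a) / real ?N"
    using N by (simp add: field_simps)
  moreover have "(b - a) / real ?N \<le> 1" "0 \<le> (b - a) / real ?N"
    using N ab(2) by (simp_all add: divide_le_eq_1)
  ultimately have "\<bar>?s - ?t\<bar> \<le> 1"
    by (simp add: abs_le_iff)
  moreover have "dist (\<gamma> ?s) (\<gamma> ?t) = \<bar>?s - ?t\<bar>"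
    using is_geodesic_dist[OF g] samples_param[OF ab(2), of i] samples_param[OF ab(2), of "Suc i"] iN ab
    by simp
  ultimately show "dist (samples \<gamma> a b ! i) (samples \<gamma> a b ! Suc i) \<le> 1"
    using i unfolding samples_def by (simp del: upt_Suc)
qed

lemma list_step_into:
  assumes "xs \<noteq> []" "\<not> P (hd xs)" "P (last xs)"
  shows "\<exists>i. Suc i < length xs \<and> \<not> P (xs ! i) \<and> P (xs ! Suc i)"
  using assms
proof (induction xs)
  case (Cons x xs)
  show ?case
  proof (cases "xs = []")
    case False
    show ?thesis
    proof (cases "P (hd xs)")
      case True
      then show ?thesis
        using Cons.prems False by (intro exI[of _ 0]) (auto simp: hd_conv_nth)
    next
      case False
      moreover have "P (last xs)"
        using Cons.prems \<open>xs \<noteq> []\<close> by simp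
      ultimately obtain i where "Suc i < length xs" "\<not> P (xs ! i)" "P (xs ! Suc i)"
        using Cons.IH \<open>xs \<noteq> []\<close> by blast
      then show ?thesis
        by (intro exI[of _ "Suc i"]) simp
    qed
  qed (use Cons.prems in simp)
qed simp

section \<open>The bottleneck property of quasi-trees\<close>

text \<open>Manning's bottleneck property, with chains of unit steps in place of paths.\<close>

definition geodesic_bottleneck :: "real \<Rightarrow> 'a::metric_space itself \<Rightarrow> bool" where
  "geodesic_bottleneck \<Delta> _ \<longleftrightarrow>
     (\<forall>(\<gamma> :: real \<Rightarrow> 'a) x y s zs. is_geodesic \<gamma> x y \<longrightarrow> 0 \<le> s \<longrightarrow> s \<le> dist x y \<longrightarrow>
        unit_chain zs \<longrightarrow> hd zs = x \<longrightarrow> last zs = y \<longrightarrow> (\<exists>z\<in>set zs. dist z (\<gamma> s) \<le> \<Delta>))"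

locale qi_into_0_hyperbolic =
  fixes V :: "'v set" and D :: "'v \<Rightarrow> 'v \<Rightarrow> real" and g :: "'a::metric_space \<Rightarrow> 'v"
    and K C :: real
  assumes g_in: "\<And>x. g x \<in> V"
    and D_sym: "\<And>x y. x \<in> V \<Longrightarrow> y \<in> V \<Longrightarrow> D x y = D y x"
    and D_triangle: "\<And>x y z. x \<in> V \<Longrightarrow> y \<in> V \<Longrightarrow> z \<in> V \<Longrightarrow> D x z \<le> D x y + D y z"
    and D_refl: "\<And>x. x \<in> V \<Longrightarrow> D x x = 0"
    and ultra: "\<And>q a b c. q \<in> V \<Longrightarrow> a \<in> V \<Longrightarrow> b \<in> V \<Longrightarrow> c \<in> V \<Longrightarrow>
      min (gromov_product D q a b) (gromov_product D q b c) \<le> gromov_product D q a c"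
    and K: "1 \<le> K" and C: "0 \<le> C"
    and lower: "\<And>x y. dist x y / K - C \<le> D (g x) (g y)"
    and upper: "\<And>x y. D (g x) (g y) \<le> K * dist x y + C"
begin

abbreviation gp :: "'v \<Rightarrow> 'v \<Rightarrow> 'v \<Rightarrow> real" where
  "gp \<equiv> gromov_product D"

lemma dist_le_D: "dist x y \<le> K * (D (g x) (g y) + C)"
proof -
  have "dist x y / K \<le> D (g x) (g y) + C"
    using lower[of x y] by simp
  then show ?thesis
    using K by (simp add: divide_le_eq mult.commute)
qed

lemma gp_le: "q \<in> V \<Longrightarrow> a \<in> V \<Longrightarrow> b \<in> V \<Longrightarrow> gp q a b \<le> D q a"
  unfolding gromov_product_def using D_triangle[of q a b] by simp

lemma gp_sym: "a \<in> V \<Longrightarrow> b \<in> V \<Longrightarrow> gp q a b = gp q b a"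
  unfolding gromov_product_def using D_sym[of a b] by simp

lemma gp_self: "q \<in> V \<Longrightarrow> a \<in> V \<Longrightarrow> gp q a a = D q a"
  unfolding gromov_product_def using D_refl by simp

lemma gp_base: "q \<in> V \<Longrightarrow> a \<in> V \<Longrightarrow> gp q q a = 0"
  unfolding gromov_product_def using D_refl D_sym by simp

definition jump :: real where
  "jump = K + C"

lemma jump_nonneg: "0 \<le> jump"
  unfolding jump_def using K C by simp

lemma unit_chain_image: "unit_chain zs \<Longrightarrow> walk (\<lambda>u v. D u v \<le> jump) (map g zs)"
proof (erule walk_map)
  fix u v :: 'a
  assume "dist u v \<le> 1"
  then have "K * dist u v \<le> K"
    using K by (simp add: mult_left_le)
  then show "D (g u) (g v) \<le> jump"
    using upper[of u v] unfolding jump_def by linarith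
qed

lemma chain_near_base:
  assumes w: "walk (\<lambda>u v. D u v \<le> jump) ps" and "set ps \<subseteq> V" and q: "q \<in> V"
  shows "\<exists>p\<in>set ps. D q p \<le> gp q (hd ps) (last ps) + jump"
proof (rule ccontr)
  let ?a = "hd ps" and ?h = "gp q (hd ps) (last ps)"
  assume "\<not> ?thesis"
  then have far: "\<And>p. p \<in> set ps \<Longrightarrow> D q p > ?h + jump"
    by force
  have ne: "ps \<noteq> []"
    using w by auto
  have a: "?a \<in> V" "last ps \<in> V"
    using assms(2) ne by auto
  have "\<not> gp q ?a ?a \<le> ?h"
    using gp_self[OF q a(1)] far[of ?a] ne jump_nonneg by simp
  then obtain i where i: "Suc i < length ps" "\<not> gp q ?a (ps ! i) \<le> ?h" "gp q ?a (ps ! Suc i) \<le> ?h"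
    using list_step_into[OF ne, of "\<lambda>p. gp q ?a p \<le> ?h"] by auto
  have V: "ps ! i \<in> V" "ps ! Suc i \<in> V"
    using assms(2) i(1) by auto
  have "gp q (ps ! i) (ps ! Suc i) \<le> ?h"
    using ultra[OF q a(1) V] i by linarith
  then have "D q (ps ! i) + D q (ps ! Suc i) - D (ps ! i) (ps ! Suc i) \<le> 2 * ?h"
    using gromov_product_dist[of D "ps ! i" "ps ! Suc i" q] by linarith
  moreover have "D (ps ! i) (ps ! Suc i) \<le> jump"
    using walk_nth[OF w i(1)] by simp
  moreover have "D q (ps ! i) > ?h + jump" "D q (ps ! Suc i) > ?h + jump"
    using far i(1) by auto
  ultimately show False
    using jump_nonneg by linarith
qed

lemma chain_crosses_level:
  assumes w: "walk (\<lambda>u v. D u v \<le> jump) ps" and "set ps \<subseteq> V" and "last ps = q"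
    and t: "0 \<le> t" "t < D q (hd ps)"
  shows "\<exists>p\<in>set ps. gp q p (hd ps) > t \<and> D q p \<le> t + jump"
proof -
  let ?a = "hd ps"
  have ne: "ps \<noteq> []"
    using w by auto
  have a: "?a \<in> V" and q: "q \<in> V"
    using assms(2,3) ne by auto
  have "\<not> gp q ?a ?a \<le> t" "gp q (last ps) ?a \<le> t"
    using gp_self[OF q a] gp_base[OF q a] assms(3) t by auto
  then obtain i where i: "Suc i < length ps" "\<not> gp q (ps ! i) ?a \<le> t" "gp q (ps ! Suc i) ?a \<le> t"
    using list_step_into[OF ne, of "\<lambda>p. gp q p ?a \<le> t"] by auto
  have V: "ps ! i \<in> V" "ps ! Suc i \<in> V"
    using assms(2) i(1) by auto
  have "gp q (ps ! Suc i) (ps ! i) \<le> t"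
    using ultra[OF q V(2) V(1) a] i by linarith
  moreover have "D (ps ! Suc i) (ps ! i) \<le> jump"
    using walk_nth[OF w i(1)] D_sym V by simp
  moreover have "D q (ps ! i) \<le> D q (ps ! Suc i) + D (ps ! Suc i) (ps ! i)"
    using D_triangle q V by blast
  ultimately have "D q (ps ! i) \<le> t + jump"
    using gromov_product_dist[of D "ps ! Suc i" "ps ! i" q] by linarith
  then show ?thesis
    using i by force
qed

definition centre_bound :: real where
  "centre_bound = K * (K * (2 * jump + C)) + C"

definition bottleneck_const :: real where
  "bottleneck_const = K * (centre_bound + jump + C)"

lemma geodesic_exits_branch:
  assumes geo: "is_geodesic \<gamma> x y" and ab: "0 \<le> a" "a \<le> dist x y" "0 \<le> b" "b \<le> dist x y"
    and t: "0 \<le> t" "t < D (g (\<gamma> b)) (g (\<gamma> a))"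
  obtains c where "min a b \<le> c" "c \<le> max a b"
    "t < gp (g (\<gamma> b)) (g (\<gamma> c)) (g (\<gamma> a))" "D (g (\<gamma> b)) (g (\<gamma> c)) \<le> t + jump"
proof -
  define zs where "zs = (if a \<le> b then samples \<gamma> a b else rev (samples \<gamma> b a))"
  have "unit_chain zs \<and> hd zs = \<gamma> a \<and> last zs = \<gamma> b"
  proof (cases "a \<le> b")
    case True
    then show ?thesis
      using samples_unit_chain[OF geo ab(1) True ab(4)] unfolding zs_def by (simp add: samples_ends)
  next
    case False
    then show ?thesis
      using unit_chain_rev[OF samples_unit_chain[OF geo ab(3) _ ab(2)]]
      unfolding zs_def by (simp add: hd_rev last_rev samples_ends)
  qed
  then have zs: "unit_chain zs" "hd zs = \<gamma> a" "last zs = \<gamma> b"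
    by simp_all
  have on_geodesic: "\<exists>c. min a b \<le> c \<and> c \<le> max a b \<and> z = \<gamma> c" if z: "z \<in> set zs" for z
  proof (cases "a \<le> b")
    case True
    with z have "z \<in> set (samples \<gamma> a b)"
      unfolding zs_def by simp
    then obtain c where "a \<le> c" "c \<le> b" "z = \<gamma> c"
      by (rule samples_set[OF True])
    with True show ?thesis
      by (intro exI[of _ c]) simp
  next
    case False
    then have "b \<le> a"
      by simp
    from z False have "z \<in> set (samples \<gamma> b a)"
      unfolding zs_def by simp
    then obtain c where "b \<le> c" "c \<le> a" "z = \<gamma> c"
      by (rule samples_set[OF \<open>b \<le> a\<close>])
    with False show ?thesis
      by (intro exI[of _ c]) simp
  qed
  have "walk (\<lambda>u v. D u v \<le> jump) (map g zs)"
    by (rule unit_chain_image[OF zs(1)])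
  moreover have "hd (map g zs) = g (\<gamma> a)" "last (map g zs) = g (\<gamma> b)"
    using zs walk_nonempty[OF zs(1)] by (simp_all add: hd_map last_map)
  ultimately obtain p where "p \<in> set (map g zs)" "t < gp (g (\<gamma> b)) p (g (\<gamma> a))" "D (g (\<gamma> b)) p \<le> t + jump"
    using chain_crosses_level[of "map g zs" "g (\<gamma> b)" t] g_in t by force
  with on_geodesic that show ?thesis
    by auto
qed

text \<open>Seen from the image of a point \<open>w\<close> on a geodesic from \<open>x\<close> to \<open>y\<close>, the images of \<open>x\<close> and
  \<open>y\<close> lie in different branches: otherwise the two halves of the geodesic would leave the
  branch through nearby points, which are far apart in \<open>X\<close>.\<close>

lemma gp_geodesic_point:
  assumes geo: "is_geodesic \<gamma> x y" and s: "0 \<le> s" "s \<le> dist x y"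
  shows "gp (g (\<gamma> s)) (g x) (g y) \<le> centre_bound"
proof (rule ccontr)
  let ?L = "dist x y" and ?q = "g (\<gamma> s)"
  assume "\<not> ?thesis"
  then have h: "centre_bound < gp ?q (g x) (g y)"
    by simp
  have ends: "\<gamma> 0 = x" "\<gamma> ?L = y"
    using is_geodesic_ends[OF geo] by auto
  have cb: "0 \<le> centre_bound"
    unfolding centre_bound_def using K C jump_nonneg by simp
  have "centre_bound < D ?q (g (\<gamma> 0))"
    using h gp_le[OF g_in g_in g_in] ends by (metis less_le_trans)
  then obtain s1 where "min 0 s \<le> s1" "s1 \<le> max 0 s" "centre_bound < gp ?q (g (\<gamma> s1)) (g (\<gamma> 0))"
    "D ?q (g (\<gamma> s1)) \<le> centre_bound + jump"
    using geodesic_exits_branch[OF geo order.refl zero_le_dist s cb] by blast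
  then have s1: "0 \<le> s1" "s1 \<le> s" "centre_bound < gp ?q (g (\<gamma> s1)) (g x)"
    "D ?q (g (\<gamma> s1)) \<le> centre_bound + jump"
    using s ends by simp_all
  have "centre_bound < D ?q (g (\<gamma> ?L))"
    using h gp_le[OF g_in g_in g_in] gp_sym[OF g_in g_in] ends by (metis less_le_trans)
  then obtain s2 where "min ?L s \<le> s2" "s2 \<le> max ?L s" "centre_bound < gp ?q (g (\<gamma> s2)) (g (\<gamma> ?L))"
    "D ?q (g (\<gamma> s2)) \<le> centre_bound + jump"
    using geodesic_exits_branch[OF geo zero_le_dist order.refl s cb] by blast
  then have s2: "s \<le> s2" "s2 \<le> ?L" "centre_bound < gp ?q (g (\<gamma> s2)) (g y)"
    "D ?q (g (\<gamma> s2)) \<le> centre_bound + jump"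
    using s ends by simp_all
  have "centre_bound < gp ?q (g (\<gamma> s1)) (g (\<gamma> s2))"
    using ultra[OF g_in g_in g_in g_in, of "\<gamma> s" "\<gamma> s1" x "\<gamma> s2"]
      ultra[OF g_in g_in g_in g_in, of "\<gamma> s" x y "\<gamma> s2"] gp_sym[OF g_in g_in, of ?q y "\<gamma> s2"]
      s1(3) s2(3) h by linarith
  then have "D (g (\<gamma> s1)) (g (\<gamma> s2)) < 2 * jump"
    using s1(4) s2(4) gromov_product_dist[of D "g (\<gamma> s1)" "g (\<gamma> s2)" ?q] by linarith
  then have "dist (\<gamma> s1) (\<gamma> s2) \<le> K * (2 * jump + C)"
    using dist_le_D[of "\<gamma> s1" "\<gamma> s2"] K by (smt (verit) mult_left_mono)
  moreover have "dist (\<gamma> s1) (\<gamma> s2) = s2 - s1" "dist (\<gamma> s) (\<gamma> s1) = s - s1"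
    using is_geodesic_dist[OF geo] s s1 s2 by auto
  ultimately have "K * dist (\<gamma> s) (\<gamma> s1) \<le> K * (K * (2 * jump + C))"
    using K s2(1) by (intro mult_left_mono) auto
  then have "D ?q (g (\<gamma> s1)) \<le> centre_bound"
    using upper[of "\<gamma> s" "\<gamma> s1"] unfolding centre_bound_def by simp
  moreover have "gp ?q (g (\<gamma> s1)) (g x) \<le> D ?q (g (\<gamma> s1))"
    using gp_le g_in by blast
  ultimately show False
    using s1(3) by simp
qed

lemma bottleneck: "geodesic_bottleneck bottleneck_const TYPE('a)"
  unfolding geodesic_bottleneck_def
proof (intro allI impI)
  fix \<gamma> :: "real \<Rightarrow> 'a" and x y s zs
  assume geo: "is_geodesic \<gamma> x y" and s: "0 \<le> s" "s \<le> dist x y"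
    and zs: "unit_chain zs" "hd zs = x" "last zs = y"
  let ?q = "g (\<gamma> s)"
  have "set (map g zs) \<subseteq> V"
    using g_in by auto
  then obtain p where p: "p \<in> set (map g zs)" "D ?q p \<le> gp ?q (hd (map g zs)) (last (map g zs)) + jump"
    using chain_near_base[OF unit_chain_image[OF zs(1)] _ g_in] by blast
  moreover have "hd (map g zs) = g x" "last (map g zs) = g y"
    using zs walk_nonempty[OF zs(1)] by (simp_all add: hd_map last_map)
  ultimately have p: "p \<in> set (map g zs)" "D ?q p \<le> gp ?q (g x) (g y) + jump"
    by simp_all
  obtain z where z: "z \<in> set zs" "p = g z"
    using p(1) by auto
  have "D (g z) ?q + C \<le> centre_bound + jump + C"
    using p(2) gp_geodesic_point[OF geo s] D_sym g_in z(2) by simp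
  then have "K * (D (g z) ?q + C) \<le> bottleneck_const"
    unfolding bottleneck_const_def using K by (intro mult_left_mono) auto
  then show "\<exists>z\<in>set zs. dist z (\<gamma> s) \<le> bottleneck_const"
    using dist_le_D[of z "\<gamma> s"] z(1) by force
qed

end

lemma quasi_tree_bottleneck:
  assumes tree: "is_tree V E" and qi: "quasi_isometric (UNIV :: 'a::metric_space set) dist (tree_points V E) (tree_dist E)"
  shows "\<exists>\<Delta>. geodesic_bottleneck \<Delta> TYPE('a)"
proof -
  obtain K C f where K: "1 \<le> K" "0 \<le> C"
    and f: "qi_map K C (UNIV :: 'a set) dist (tree_points V E) (tree_dist E) f"
    using qi unfolding quasi_isometric_def by blast
  interpret qi_into_0_hyperbolic V "gdist E" "\<lambda>x. fst (f x)" K "C + 2"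
  proof
    show "\<And>x y. x \<in> V \<Longrightarrow> y \<in> V \<Longrightarrow> gdist E x y = gdist E y x"
      unfolding gdist_eq_walk_dist using walk_dist_sym tree_edgeD[OF tree] by metis
    show "\<And>x y z. x \<in> V \<Longrightarrow> y \<in> V \<Longrightarrow> z \<in> V \<Longrightarrow> gdist E x z \<le> gdist E x y + gdist E y z"
      unfolding gdist_eq_walk_dist
      using walk_dist_triangle tree_reachable[OF tree] by (metis of_nat_add of_nat_le_iff)
  qed (use K qi_map_vertex_projection[OF tree f] tree_gromov_product_ultra[OF tree]
      in \<open>auto simp: gdist_eq_walk_dist\<close>)
  show ?thesis
    using bottleneck by blast
qed

section \<open>The tree of components outside balls\<close>

locale level_tree =
  fixes base :: "'a::metric_space" and \<Delta> :: real
  assumes geodesic: "geodesic_space TYPE('a)" and proper: "proper_space TYPE('a)"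
    and bottleneck: "geodesic_bottleneck \<Delta> TYPE('a)"
begin

lemma bottleneck_nonneg: "0 \<le> \<Delta>"
proof -
  obtain \<gamma> where g: "is_geodesic \<gamma> base base"
    using geodesic_exists[OF geodesic] by blast
  then have "\<exists>z\<in>set [base]. dist z (\<gamma> 0) \<le> \<Delta>"
    using bottleneck[unfolded geodesic_bottleneck_def, rule_format, of \<gamma> base base 0 "[base]"] by simp
  then show ?thesis
    using is_geodesic_ends[OF g] by simp
qed

definition linked :: "nat \<Rightarrow> 'a \<Rightarrow> 'a \<Rightarrow> bool" where
  "linked k x y \<longleftrightarrow>
     (\<exists>zs. unit_chain zs \<and> hd zs = x \<and> last zs = y \<and> (\<forall>z\<in>set zs. real k \<le> dist base z))"

definition component :: "nat \<Rightarrow> 'a \<Rightarrow> 'a set" where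
  "component k x = {y. linked k x y}"

definition Verts :: "(nat \<times> 'a set) set" where
  "Verts = {(k, component k x) | k x. real k \<le> dist base x}"

definition root :: "nat \<times> 'a set" where
  "root = (0, UNIV)"

definition up :: "nat \<times> 'a set \<Rightarrow> nat \<times> 'a set" where
  "up v = (fst v - 1, component (fst v - 1) (SOME x. x \<in> snd v))"

definition Edges :: "nat \<times> 'a set \<Rightarrow> nat \<times> 'a set \<Rightarrow> bool" where
  "Edges u v \<longleftrightarrow> u \<in> Verts \<and> v \<in> Verts \<and> ((v \<noteq> root \<and> u = up v) \<or> (u \<noteq> root \<and> v = up u))"

lemma linked_refl: "real k \<le> dist base x \<Longrightarrow> linked k x x"
  unfolding linked_def by (intro exI[of _ "[x]"]) simp

lemma linked_dist_base:
  assumes "linked k x y"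
  shows "real k \<le> dist base x \<and> real k \<le> dist base y"
proof -
  obtain zs where "unit_chain zs" "hd zs = x" "last zs = y" "\<forall>z\<in>set zs. real k \<le> dist base z"
    using assms unfolding linked_def by blast
  then show ?thesis
    using hd_in_set last_in_set walk_nonempty by metis
qed

lemma linked_sym:
  assumes "linked k x y"
  shows "linked k y x"
proof -
  obtain zs where "unit_chain zs" "hd zs = x" "last zs = y" "\<forall>z\<in>set zs. real k \<le> dist base z"
    using assms unfolding linked_def by blast
  then show ?thesis
    unfolding linked_def
    by (intro exI[of _ "rev zs"]) (simp add: unit_chain_rev hd_rev last_rev)
qed

lemma linked_trans:
  assumes "linked k x y" "linked k y z"
  shows "linked k x z"
proof -
  obtain xs ys where xs: "unit_chain xs" "hd xs = x" "last xs = y" "\<forall>w\<in>set xs. real k \<le> dist base w"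
    and ys: "unit_chain ys" "hd ys = y" "last ys = z" "\<forall>w\<in>set ys. real k \<le> dist base w"
    using assms unfolding linked_def by blast
  have ne: "xs \<noteq> []" "ys \<noteq> []"
    using xs ys by auto
  have "\<forall>w\<in>set (xs @ tl ys). real k \<le> dist base w"
    using xs ys ne by (auto dest: list.set_sel(2))
  then show ?thesis
    unfolding linked_def using walk_join[OF xs(1) ys(1)] last_join[OF ne] xs ys ne
    by (intro exI[of _ "xs @ tl ys"]) simp
qed

lemma linked_mono:
  assumes "j \<le> k" "linked k x y"
  shows "linked j x y"
proof -
  obtain zs where "unit_chain zs" "hd zs = x" "last zs = y" "\<forall>z\<in>set zs. real k \<le> dist base z"
    using assms(2) unfolding linked_def by blast
  moreover have "real j \<le> real k"
    using assms(1) by simp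
  ultimately show ?thesis
    unfolding linked_def by force
qed

lemma component_eq: "linked k x y \<Longrightarrow> component k x = component k y"
  unfolding component_def using linked_sym linked_trans by blast

lemma component_eq_iff: "real k \<le> dist base x \<Longrightarrow> component k x = component k y \<longleftrightarrow> linked k x y"
  unfolding component_def using linked_refl linked_sym component_eq[unfolded component_def] by blast

lemma dist_base_geodesic:
  assumes "is_geodesic \<gamma> x base" "0 \<le> \<tau>" "\<tau> \<le> dist x base"
  shows "dist base (\<gamma> \<tau>) = dist x base - \<tau>"
  using is_geodesic_dist[OF assms(1), of "dist x base" \<tau>] is_geodesic_ends[OF assms(1)] assms(2,3)
  by simp

lemma gromov_product_base_nonneg: "0 \<le> gromov_product dist base x y"
  unfolding gromov_product_def using dist_triangle[of x y base] by (simp add: dist_commute)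

lemma gromov_product_base_le: "gromov_product dist base x y \<le> dist base x"
  unfolding gromov_product_def using dist_triangle[of base y x] by simp

text \<open>A geodesic from \<open>x\<close> to \<open>y\<close> stays outside the ball of radius \<open>(x\<cdot>y)\<close> about the base.\<close>

lemma linked_geodesic:
  assumes k: "real k \<le> gromov_product dist base x y"
  shows "linked k x y"
proof -
  obtain \<gamma> where g: "is_geodesic \<gamma> x y"
    using geodesic_exists[OF geodesic] by blast
  let ?L = "dist x y"
  have "real k \<le> dist base z" if z: "z \<in> set (samples \<gamma> 0 ?L)" for z
  proof -
    obtain \<sigma> where s: "0 \<le> \<sigma>" "\<sigma> \<le> ?L" "z = \<gamma> \<sigma>"
      by (rule samples_set[OF zero_le_dist z])
    have "dist x z = \<sigma>" "dist z y = ?L - \<sigma>"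
      using is_geodesic_dist[OF g, of 0 \<sigma>] is_geodesic_dist[OF g, of \<sigma> ?L] is_geodesic_ends[OF g] s
      by auto
    then show ?thesis
      using k dist_triangle[of base x z] dist_triangle[of base y z]
      unfolding gromov_product_def by (simp add: dist_commute)
  qed
  then show ?thesis
    unfolding linked_def using samples_unit_chain[OF g] samples_ends[of \<gamma> 0 ?L] is_geodesic_ends[OF g]
    by (intro exI[of _ "samples \<gamma> 0 ?L"]) auto
qed

lemma linked_0: "linked 0 x y"
  using linked_geodesic gromov_product_base_nonneg by simp

lemma component_0: "component 0 x = UNIV"
  unfolding component_def using linked_0 by blast

lemma linked_to_sphere:
  assumes "real k \<le> dist base x"
  shows "\<exists>x'. dist base x' = real k \<and> linked k x x'"
proof -
  obtain \<gamma> where g: "is_geodesic \<gamma> x base"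
    using geodesic_exists[OF geodesic] by blast
  define \<sigma> where "\<sigma> = dist x base - real k"
  have s: "0 \<le> \<sigma>" "\<sigma> \<le> dist x base"
    using assms unfolding \<sigma>_def by (auto simp: dist_commute)
  have "real k \<le> dist base z" if z: "z \<in> set (samples \<gamma> 0 \<sigma>)" for z
  proof -
    obtain \<tau> where "0 \<le> \<tau>" "\<tau> \<le> \<sigma>" "z = \<gamma> \<tau>"
      by (rule samples_set[OF s(1) z])
    then show ?thesis
      using dist_base_geodesic[OF g, of \<tau>] s unfolding \<sigma>_def by simp
  qed
  then have "linked k x (\<gamma> \<sigma>)"
    unfolding linked_def using samples_unit_chain[OF g order.refl s] samples_ends[of \<gamma> 0 \<sigma>]
      is_geodesic_ends[OF g]
    by (intro exI[of _ "samples \<gamma> 0 \<sigma>"]) auto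
  moreover have "dist base (\<gamma> \<sigma>) = real k"
    using dist_base_geodesic[OF g s] unfolding \<sigma>_def by simp
  ultimately show ?thesis
    by blast
qed

lemma up_component:
  assumes "real k \<le> dist base x"
  shows "up (k, component k x) = (k - 1, component (k - 1) x)"
proof -
  have "x \<in> component k x"
    using linked_refl[OF assms] unfolding component_def by simp
  then have "(SOME y. y \<in> component k x) \<in> component k x"
    by (rule someI)
  then have "linked k x (SOME y. y \<in> component k x)"
    unfolding component_def by simp
  then have "linked (k - 1) x (SOME y. y \<in> component k x)"
    using linked_mono[of "k - 1" k] by simp
  then show ?thesis
    unfolding up_def using component_eq by simp
qed

lemma Verts_cases: "v \<in> Verts \<Longrightarrow> \<exists>k x. v = (k, component k x) \<and> real k \<le> dist base x"
  unfolding Verts_def by blast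

lemma Verts_I: "real k \<le> dist base x \<Longrightarrow> (k, component k x) \<in> Verts"
  unfolding Verts_def by blast

lemma parent_tree_Verts: "parent_tree Verts Edges fst up root"
proof
  show "root \<in> Verts"
    using Verts_I[of 0 base] component_0 unfolding root_def by simp
  show "fst root = 0"
    unfolding root_def by simp
  fix v
  assume v: "v \<in> Verts"
  then obtain k x where kx: "v = (k, component k x)" "real k \<le> dist base x"
    using Verts_cases by blast
  show "fst v = 0 \<Longrightarrow> v = root"
    using kx component_0 unfolding root_def by simp
  assume "v \<noteq> root"
  then have "k \<noteq> 0"
    using kx component_0 unfolding root_def by auto
  then show "up v \<in> Verts" "Suc (fst (up v)) = fst v"
    using up_component[OF kx(2)] kx Verts_I[of "k - 1" x] by auto
qed (simp add: Edges_def)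

sublocale T: parent_tree Verts Edges fst up root
  by (rule parent_tree_Verts)

lemma ancestor_component:
  assumes "real k \<le> dist base x" "j \<le> k"
  shows "T.ancestor j (k, component k x) = (j, component j x)"
proof -
  have "(up ^^ i) (k, component k x) = (k - i, component (k - i) x)" if "i \<le> k" for i
    using that
  proof (induction i)
    case (Suc i)
    have "real (k - i) \<le> dist base x"
      using assms(1) by linarith
    then show ?case
      using Suc up_component[of "k - i" x] by (simp add: diff_Suc)
  qed simp
  then show ?thesis
    unfolding T.ancestor_def using assms(2) by simp
qed

lemma meet_component:
  assumes x: "real k \<le> dist base x" and y: "real l \<le> dist base y"
  shows "linked (T.meet (k, component k x) (l, component l y)) x y"
    and "\<And>j. j \<le> min k l \<Longrightarrow> linked j x y \<Longrightarrow> j \<le> T.meet (k, component k x) (l, component l y)"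
proof -
  let ?m = "T.meet (k, component k x) (l, component l y)"
  have m: "?m \<le> min k l" "T.ancestor ?m (k, component k x) = T.ancestor ?m (l, component l y)"
    using T.meet[OF Verts_I[OF x] Verts_I[OF y]] by auto
  then have "component ?m x = component ?m y"
    using ancestor_component[OF x] ancestor_component[OF y] by simp
  moreover have "real ?m \<le> dist base x"
    using m x by linarith
  ultimately show "linked ?m x y"
    using component_eq_iff by blast
  fix j
  assume "j \<le> min k l" "linked j x y"
  then have "T.ancestor j (k, component k x) = T.ancestor j (l, component l y)"
    using component_eq ancestor_component[OF x] ancestor_component[OF y] by simp
  then show "j \<le> ?m"
    using T.meet_greatest \<open>j \<le> min k l\<close> by simp
qed

definition level :: "'a \<Rightarrow> nat" where
  "level x = nat \<lfloor>dist base x\<rfloor>"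

definition vertex_of :: "'a \<Rightarrow> nat \<times> 'a set" where
  "vertex_of x = (level x, component (level x) x)"

lemma level: "real (level x) \<le> dist base x" "dist base x < real (level x) + 1"
  unfolding level_def using zero_le_dist[of base x] by linarith+

lemma vertex_of_in: "vertex_of x \<in> Verts"
  unfolding vertex_of_def using Verts_I level by blast

lemma vertex_of_onto:
  assumes "u \<in> Verts"
  shows "\<exists>x. vertex_of x = u"
proof -
  obtain k x where kx: "u = (k, component k x)" "real k \<le> dist base x"
    using Verts_cases assms by blast
  obtain x' where x': "dist base x' = real k" "linked k x x'"
    using linked_to_sphere[OF kx(2)] by blast
  have "level x' = k"
    unfolding level_def using x'(1) by simp
  then have "vertex_of x' = u"
    unfolding vertex_of_def using kx component_eq[OF x'(2)] by simp
  then show ?thesis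
    by blast
qed

lemma walk_dist_vertex_of:
  "real (walk_dist Edges (vertex_of x) (vertex_of y))
    = real (level x) + real (level y) - 2 * real (T.meet (vertex_of x) (vertex_of y))"
  using T.walk_dist_meet[OF vertex_of_in vertex_of_in] T.meet_le[OF vertex_of_in vertex_of_in]
  by (simp add: vertex_of_def of_nat_diff)

lemma walk_dist_vertex_of_le: "real (walk_dist Edges (vertex_of x) (vertex_of y)) \<le> dist x y + 2"
proof -
  define k where "k = nat \<lfloor>gromov_product dist base x y\<rfloor>"
  have k: "real k \<le> gromov_product dist base x y" "gromov_product dist base x y < real k + 1"
    unfolding k_def using gromov_product_base_nonneg[of x y] by linarith+
  have "gromov_product dist base x y \<le> dist base y"
    using gromov_product_base_le[of y x] by (simp add: gromov_product_def dist_commute add.commute)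
  then have "k \<le> level x" "k \<le> level y"
    unfolding k_def level_def using gromov_product_base_le[of x y] by (auto intro!: nat_mono floor_mono)
  then have "k \<le> T.meet (vertex_of x) (vertex_of y)"
    using meet_component(2)[OF level(1) level(1), of k] linked_geodesic[OF k(1)] unfolding vertex_of_def
    by simp
  then show ?thesis
    using walk_dist_vertex_of[of x y] k level[of x] level[of y] gromov_product_dist[of dist x y base]
    by linarith
qed

text \<open>The chain, continued along the geodesic from \<open>y\<close> to the base, runs from \<open>x\<close> to the base,
  so the bottleneck property applies to it.\<close>

lemma linked_chain_near_geodesic:
  assumes "linked m x y" and g: "is_geodesic \<gamma> x base" "0 \<le> \<sigma>" "\<sigma> \<le> dist x base"
    and d: "is_geodesic \<delta> y base"
  shows "(\<exists>z. real m \<le> dist base z \<and> dist z (\<gamma> \<sigma>) \<le> \<Delta>) \<or>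
    (\<exists>\<tau>. 0 \<le> \<tau> \<and> \<tau> \<le> dist y base \<and> dist (\<delta> \<tau>) (\<gamma> \<sigma>) \<le> \<Delta>)"
proof -
  obtain zs where zs: "unit_chain zs" "hd zs = x" "last zs = y" "\<forall>z\<in>set zs. real m \<le> dist base z"
    using assms(1) unfolding linked_def by blast
  let ?ys = "samples \<delta> 0 (dist y base)"
  have ys: "unit_chain ?ys" "hd ?ys = y" "last ?ys = base"
    using samples_unit_chain[OF d] samples_ends[of \<delta> 0 "dist y base"] is_geodesic_ends[OF d] by auto
  have "unit_chain (zs @ tl ?ys)" "hd (zs @ tl ?ys) = x" "last (zs @ tl ?ys) = base"
    using walk_join[OF zs(1) ys(1)] last_join[OF walk_nonempty[OF zs(1)] samples_ne] zs ys
      walk_nonempty[OF zs(1)] by auto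
  then obtain z where z: "z \<in> set (zs @ tl ?ys)" "dist z (\<gamma> \<sigma>) \<le> \<Delta>"
    using bottleneck[unfolded geodesic_bottleneck_def, rule_format, OF g] by blast
  show ?thesis
  proof (cases "z \<in> set zs")
    case True
    then show ?thesis
      using zs(4) z(2) by blast
  next
    case False
    then have "z \<in> set ?ys"
      using z(1) list.set_sel(2)[OF samples_ne] by auto
    then obtain \<tau> where "0 \<le> \<tau>" "\<tau> \<le> dist y base" "z = \<delta> \<tau>"
      by (rule samples_set[OF zero_le_dist])
    then show ?thesis
      using z(2) by blast
  qed
qed

text \<open>Conversely, a chain linking \<open>x\<close> to \<open>y\<close> at level \<open>m\<close> passes near the point at distance
  \<open>m - \<Delta> - 1\<close> from the base on a geodesic from \<open>x\<close> to the base; it can only do so along the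
  geodesic from \<open>y\<close>, which forces \<open>(x\<cdot>y)\<close> to be large.\<close>

lemma linked_le_gromov_product:
  assumes "linked m x y"
  shows "real m \<le> gromov_product dist base x y + 2 * \<Delta> + 1"
proof (cases "real m - \<Delta> - 1 \<le> 0")
  case True
  then show ?thesis
    using gromov_product_base_nonneg[of x y] bottleneck_nonneg by linarith
next
  case False
  define r where "r = real m - \<Delta> - 1"
  have mx: "real m \<le> dist base x"
    using linked_dist_base[OF assms] by simp
  obtain \<gamma> where g: "is_geodesic \<gamma> x base"
    using geodesic_exists[OF geodesic] by blast
  obtain \<delta> where d: "is_geodesic \<delta> y base"
    using geodesic_exists[OF geodesic] by blast
  define \<sigma> where "\<sigma> = dist x base - r"
  have \<sigma>: "0 \<le> \<sigma>" "\<sigma> \<le> dist x base"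
    using False mx bottleneck_nonneg unfolding \<sigma>_def r_def by (auto simp: dist_commute)
  have w: "dist base (\<gamma> \<sigma>) = r" "dist x (\<gamma> \<sigma>) = \<sigma>"
    using dist_base_geodesic[OF g \<sigma>] is_geodesic_dist[OF g, of 0 \<sigma>] is_geodesic_ends[OF g] \<sigma>
    unfolding \<sigma>_def by auto
  from linked_chain_near_geodesic[OF assms g \<sigma> d] show ?thesis
  proof (elim disjE exE conjE)
    fix z
    assume "real m \<le> dist base z" "dist z (\<gamma> \<sigma>) \<le> \<Delta>"
    then show ?thesis
      using w(1) dist_triangle[of base z "\<gamma> \<sigma>"] unfolding r_def by (simp add: dist_commute)
  next
    fix \<tau>
    assume \<tau>: "0 \<le> \<tau>" "\<tau> \<le> dist y base" and near: "dist (\<delta> \<tau>) (\<gamma> \<sigma>) \<le> \<Delta>"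
    have "dist base (\<delta> \<tau>) = dist y base - \<tau>" "dist y (\<delta> \<tau>) = \<tau>"
      using dist_base_geodesic[OF d \<tau>] is_geodesic_dist[OF d, of 0 \<tau>] is_geodesic_ends[OF d] \<tau>
      by auto
    moreover have "dist x y \<le> dist x (\<gamma> \<sigma>) + dist (\<gamma> \<sigma>) (\<delta> \<tau>) + dist (\<delta> \<tau>) y"
      using dist_triangle[of x y "\<gamma> \<sigma>"] dist_triangle[of "\<gamma> \<sigma>" y "\<delta> \<tau>"] by simp
    moreover have "dist base (\<gamma> \<sigma>) \<le> dist base (\<delta> \<tau>) + dist (\<delta> \<tau>) (\<gamma> \<sigma>)"
      by (rule dist_triangle)
    ultimately show ?thesis
      using w near gromov_product_dist[of dist x y base]
      unfolding \<sigma>_def r_def by (simp add: dist_commute)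
  qed
qed

lemma walk_dist_vertex_of_ge: "dist x y - 4 * \<Delta> - 4 \<le> real (walk_dist Edges (vertex_of x) (vertex_of y))"
proof -
  have "linked (T.meet (vertex_of x) (vertex_of y)) x y"
    using meet_component(1)[OF level(1) level(1)] unfolding vertex_of_def by simp
  then have "real (T.meet (vertex_of x) (vertex_of y)) \<le> gromov_product dist base x y + 2 * \<Delta> + 1"
    by (rule linked_le_gromov_product)
  then show ?thesis
    using walk_dist_vertex_of[of x y] level(2)[of x] level(2)[of y] gromov_product_dist[of dist x y base]
    by linarith
qed

text \<open>Properness: the sphere of radius \<open>k\<close> about the base is covered by finitely many unit balls,
  and the points of each of them are linked at level \<open>k\<close>.\<close>

lemma level_finite: "finite {v \<in> Verts. fst v = k}"
proof -
  let ?S = "sphere base (real k)"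
  have "?S = cball base (real k) \<inter> - ball base (real k)"
    by auto
  moreover have "compact (cball base (real k) \<inter> - ball base (real k))"
    using proper unfolding proper_space_def by (intro compact_Int_closed) auto
  ultimately have "compact ?S"
    by simp
  moreover have "?S \<subseteq> (\<Union>p\<in>?S. ball p 1)"
    by force
  ultimately obtain F where F: "F \<subseteq> ?S" "finite F" "?S \<subseteq> (\<Union>p\<in>F. ball p 1)"
    using compactE_image[of ?S ?S "\<lambda>p. ball p 1"] by blast
  have "{v \<in> Verts. fst v = k} \<subseteq> (\<lambda>p. (k, component k p)) ` F"
  proof
    fix v
    assume "v \<in> {v \<in> Verts. fst v = k}"
    then obtain x where x: "v = (k, component k x)" "real k \<le> dist base x"
      using Verts_cases by fastforce
    obtain x' where x': "dist base x' = real k" "linked k x x'"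
      using linked_to_sphere[OF x(2)] by blast
    then obtain p where p: "p \<in> F" "dist p x' < 1"
      using F(3) by force
    have "dist base p = real k"
      using p(1) F(1) by auto
    then have "linked k x' p"
      unfolding linked_def using x'(1) p(2)
      by (intro exI[of _ "[x', p]"]) (simp add: dist_commute)
    then have "component k x = component k p"
      using component_eq linked_trans[OF x'(2)] by blast
    then show "v \<in> (\<lambda>p. (k, component k p)) ` F"
      using x p by auto
  qed
  then show ?thesis
    using F(2) finite_subset by blast
qed

lemma countable_Verts: "countable Verts"
proof -
  have "Verts = (\<Union>k. {v \<in> Verts. fst v = k})"
    by auto
  also have "countable \<dots>"
    using level_finite countable_finite by (intro countable_UN) auto
  finally show ?thesis .
qed

lemma neighbours_finite: "finite {v. Edges u v}"
proof -
  have "{v. Edges u v} \<subseteq> insert (up u) {v \<in> Verts. fst v = Suc (fst u)}"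
    using T.edge_cases by fastforce
  then show ?thesis
    using level_finite finite_subset by blast
qed

lemma nat_tree_quasi_isometry:
  "\<exists>(W :: nat set) F f. is_tree W F \<and> locally_finite_graph W F \<and>
    qi_map 1 (4 * \<Delta> + 6) (UNIV :: 'a set) dist (tree_points W F) (tree_dist F) f"
proof -
  let ?h = "to_nat_on Verts"
  let ?W = "?h ` Verts" and ?F = "edge_image ?h Edges" and ?\<phi> = "\<lambda>x. ?h (vertex_of x)"
  have inj: "inj_on ?h Verts"
    using countable_Verts by (rule inj_on_to_nat_on)
  interpret N: parent_tree ?W ?F "\<lambda>a. fst (inv_into Verts ?h a)" "\<lambda>a. ?h (up (inv_into Verts ?h a))" "?h root"
    by (rule T.parent_tree_image[OF inj])
  have "locally_finite_graph ?W ?F"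
    using inj neighbours_finite T.edge_cases by (intro locally_finite_edge_image) auto
  moreover have "qi_map 1 (4 * \<Delta> + 4 + 2) (UNIV :: 'a set) dist (tree_points ?W ?F) (tree_dist ?F)
      (\<lambda>x. (?\<phi> x, ?\<phi> x, 0))"
  proof (rule qi_map_vertex_embedding[OF N.is_tree])
    show "?\<phi> x \<in> ?W" for x
      using vertex_of_in by simp
    show "\<bar>gdist ?F (?\<phi> x) (?\<phi> y) - dist x y\<bar> \<le> 4 * \<Delta> + 4" for x y
      using T.walk_dist_image[OF inj vertex_of_in vertex_of_in, of x y]
        walk_dist_vertex_of_le[of x y] walk_dist_vertex_of_ge[of x y] bottleneck_nonneg
      by (simp add: gdist_eq_walk_dist abs_le_iff)
    show "\<exists>x. ?\<phi> x = w" if w: "w \<in> ?W" for w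
    proof -
      obtain u where "u \<in> Verts" "w = ?h u"
        using w by blast
      then show ?thesis
        using vertex_of_onto by blast
    qed
    show "0 \<le> 4 * \<Delta> + 4"
      using bottleneck_nonneg by simp
  qed
  moreover have "4 * \<Delta> + 4 + 2 = 4 * \<Delta> + 6"
    by simp
  ultimately show ?thesis
    using N.is_tree by auto
qed

end

theorem corollary4p26:
  fixes V :: "'v set" and E :: "'v \<Rightarrow> 'v \<Rightarrow> bool"
  assumes "geodesic_space TYPE('a::metric_space)"
    and "proper_space TYPE('a)"
    and "is_tree V E"
    and "quasi_isometric (UNIV :: 'a set) dist (tree_points V E) (tree_dist E)"
  shows "\<exists>C\<ge>0. \<exists>(W :: nat set) F f.
           is_tree W F \<and> locally_finite_graph W F \<and>
           qi_map 1 C (UNIV :: 'a set) dist (tree_points W F) (tree_dist F) f"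
proof -
  obtain \<Delta> where "geodesic_bottleneck \<Delta> TYPE('a)"
    using quasi_tree_bottleneck[OF assms(3,4)] by blast
  then interpret level_tree "undefined :: 'a" \<Delta>
    using assms(1,2) by unfold_locales
  have "0 \<le> 4 * \<Delta> + 6"
    using bottleneck_nonneg by simp
  then show ?thesis
    using nat_tree_quasi_isometry by blast
qed

end
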